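(* Consider the toric code setting and the Liouvillian $\mathcal{L}$ described in the context. Let $\ket{\Psi}\in(\mathbb{C}^2)^{\otimes 2}$, let $\rho_{\mathcal{D}}$ be an arbitrary state on the qubits of $\mathcal{D}$, and let $$\rho_0=|\Psi\rangle\langle\Psi|_{\mathcal{A}}\otimes|+\rangle\langle+|^{\otimes 2(L-1)}_{\mathcal{B}\mathcal{B}'}\otimes|0\rangle\langle 0|^{\otimes 2(L-1)}_{\mathcal{C}\mathcal{C}'}\otimes\rho_{\mathcal{D}}.$$ Then for every two-qubit Pauli operator $P=P_1\otimes P_2$, $P_j\in\{I,X,Y,Z\}$, and every $t\ge 0$, $$\mathrm{tr}\big(\overline{P}\,e^{t\mathcal{L}}(\rho_0)\big)=\langle\Psi|P|\Psi\rangle .$$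
   Context: Lattice: periodic $L\times L$, vertices $(x,y)\in\mathbb{Z}_L^2$ ($x$ eastwards, $y$ northwards), horizontal edge $h(x,y)$ joining $(x,y),(x+1,y)$, vertical edge $u(x,y)$ joining $(x,y),(x,y+1)$, one qubit per edge ($2L^2$ qubits). Plaquette $p(x,y)$ has boundary edges $h(x,y),h(x,y+1),u(x,y),u(x+1,y)$; the star of vertex $(x,y)$ is $h(x,y),h(x-1,y),u(x,y),u(x,y-1)$. Stabilizers $S_p=\prod Z$ over the boundary of $p$, $S_v=\prod X$ over the star of $v$; $\mathcal{S}$ denotes the set of all plaquettes and vertices; $\mathbf{P}_j^{\pm}=\frac12(I\pm S_j)$. Special plaquette $p_*=p(0,0)$, special vertex $v_*=(1,1)$. Correction operators: $C_{p_*}=C_{v_*}=I$; for $p=p(x,0)$ with $x\neq0$, $C_p=X$ on $u(x+1,0)$; for $p=p(x,y)$ with $y\neq0$, $C_p=X$ on $h(x,y+1)$; for $v=(x,1)$ with $x\neq1$, $C_v=Z$ on $h(x-1,1)$; for $v=(x,y)$ with $y\neq1$, $C_v=Z$ on $u(x,y-1)$. For $j\in\mathcal{S}$ define the channel $\mathcal{T}_j(\rho)=\mathbf{P}_j^+\rho\mathbf{P}_j^++C_j\mathbf{P}_j^-\rho\mathbf{P}_j^-C_j^\dagger$, and $\mathcal{L}=\sum_{j\in\mathcal{S}}(\mathcal{T}_j-\mathrm{id})$. Qubit sets: $A_1=h(0,1)$, $A_2=u(1,0)$, $\mathcal{A}=\{A_1,A_2\}$, $\mathcal{B}=\{h(0,y):y\neq1\}$,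 $\mathcal{C}=\{h(x,1):x\neq0\}$, $\mathcal{B}'=\{u(x,0):x\neq1\}$, $\mathcal{C}'=\{u(1,y):y\neq0\}$, $\mathcal{D}$ the remaining $2(L-1)^2$ qubits. Logical operators: $\bar X_1=X_{A_1}\prod_{b\in\mathcal{B}}X_b$, $\bar Z_1=Z_{A_1}\prod_{c\in\mathcal{C}}Z_c$, $\bar X_2=X_{A_2}\prod_{b\in\mathcal{B}'}X_b$, $\bar Z_2=Z_{A_2}\prod_{c\in\mathcal{C}'}Z_c$, $\bar Y_j=i\bar X_j\bar Z_j$, $\bar I=I$; for $P=P_1\otimes P_2$ (first factor on $A_1$, second on $A_2$), $\overline{P}=\bar P_1\bar P_2$. $|+\rangle,|0\rangle$ are the $+1$ eigenstates of $X$, $Z$. *)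

theory Defs
  imports "HOL-Analysis.Analysis" "Jordan_Normal_Form.Schur_Decomposition"
begin

text \<open>An n-qubit operator is a 2^n x 2^n complex matrix. The computational basis
state with index i has qubit q in state bit q i (little-endian).\<close>

definition bit_of :: "nat \<Rightarrow> nat \<Rightarrow> nat" where
  "bit_of q i = (i div 2 ^ q) mod 2"

definition mtrace :: "complex mat \<Rightarrow> complex" where
  "mtrace M = (\<Sum>i<dim_row M. M $$ (i, i))"

definition embed1 :: "nat \<Rightarrow> nat \<Rightarrow> complex mat \<Rightarrow> complex mat" where
  "embed1 n q M = mat (2 ^ n) (2 ^ n) (\<lambda>(i, j).
      if (\<forall>r<n. r \<noteq> q \<longrightarrow> bit_of r i = bit_of r j) then M $$ (bit_of q i, bit_of q j) else 0)"

definition sigX :: "complex mat" where "sigX = mat 2 2 (\<lambda>(i, j). if i \<noteq> j then 1 else 0)"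
definition sigZ :: "complex mat" where "sigZ = mat 2 2 (\<lambda>(i, j). if i = j then (if i = 0 then 1 else -1) else 0)"
definition sigY :: "complex mat" where "sigY = mat 2 2 (\<lambda>(i, j). if i = 0 \<and> j = 1 then - \<i> else if i = 1 \<and> j = 0 then \<i> else 0)"

datatype pauli = PI | PX | PY | PZ

definition pmat :: "pauli \<Rightarrow> complex mat" where
  "pmat P = (case P of PI \<Rightarrow> 1\<^sub>m 2 | PX \<Rightarrow> sigX | PY \<Rightarrow> sigY | PZ \<Rightarrow> sigZ)"

text \<open>Kronecker product of two 2x2 matrices; the first factor is the more significant one
 (basis index 2*b1 + b2).\<close>
definition kron2 :: "complex mat \<Rightarrow> complex mat \<Rightarrow> complex mat" where
  "kron2 A B = mat 4 4 (\<lambda>(i, j). A $$ (i div 2, j div 2) * B $$ (i mod 2, j mod 2))"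

definition prod_on :: "nat \<Rightarrow> complex mat \<Rightarrow> nat list \<Rightarrow> complex mat" where
  "prod_on n M qs = foldr (\<lambda>q A. embed1 n q M * A) qs (1\<^sub>m (2 ^ n))"

definition nq :: "nat \<Rightarrow> nat" where "nq L = 2 * L * L"

definition cmod :: "nat \<Rightarrow> int \<Rightarrow> nat" where "cmod L x = nat (x mod int L)"

definition hq :: "nat \<Rightarrow> int \<Rightarrow> int \<Rightarrow> nat" where
  "hq L x y = cmod L y * L + cmod L x"
definition uq :: "nat \<Rightarrow> int \<Rightarrow> int \<Rightarrow> nat" where
  "uq L x y = L * L + cmod L y * L + cmod L x"

datatype site = Plaq int int | Vert int int

definition sites :: "nat \<Rightarrow> site set" where
  "sites L = {Plaq x y | x y. 0 \<le> x \<and> x < int L \<and> 0 \<le> y \<and> y < int L}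
           \<union> {Vert x y | x y. 0 \<le> x \<and> x < int L \<and> 0 \<le> y \<and> y < int L}"

definition stab :: "nat \<Rightarrow> site \<Rightarrow> complex mat" where
  "stab L s = (case s of
      Plaq x y \<Rightarrow> prod_on (nq L) sigZ [hq L x y, hq L x (y + 1), uq L x y, uq L (x + 1) y]
    | Vert x y \<Rightarrow> prod_on (nq L) sigX [hq L x y, hq L (x - 1) y, uq L x y, uq L x (y - 1)])"

text \<open>Correction operators; p_* = p(0,0), v_* = (1,1) (taken mod L).\<close>
definition corr :: "nat \<Rightarrow> site \<Rightarrow> complex mat" where
  "corr L s = (case s of
      Plaq x y \<Rightarrow>
        (if cmod L x = 0 \<and> cmod L y = 0 then 1\<^sub>m (2 ^ nq L)
         else if cmod L y = 0 then embed1 (nq L) (uq L (x + 1) 0) sigX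
         else embed1 (nq L) (hq L x (y + 1)) sigX)
    | Vert x y \<Rightarrow>
        (if cmod L x = cmod L 1 \<and> cmod L y = cmod L 1 then 1\<^sub>m (2 ^ nq L)
         else if cmod L y = cmod L 1 then embed1 (nq L) (hq L (x - 1) 1) sigZ
         else embed1 (nq L) (uq L x (y - 1)) sigZ))"

definition projP :: "nat \<Rightarrow> site \<Rightarrow> complex mat" where
  "projP L s = (1/2 :: complex) \<cdot>\<^sub>m (1\<^sub>m (2 ^ nq L) + stab L s)"
definition projM :: "nat \<Rightarrow> site \<Rightarrow> complex mat" where
  "projM L s = (1/2 :: complex) \<cdot>\<^sub>m (1\<^sub>m (2 ^ nq L) - stab L s)"

definition chanT :: "nat \<Rightarrow> site \<Rightarrow> complex mat \<Rightarrow> complex mat" where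
  "chanT L s \<rho> = projP L s * \<rho> * projP L s
      + corr L s * projM L s * \<rho> * projM L s * mat_adjoint (corr L s)"

definition liouv :: "nat \<Rightarrow> complex mat \<Rightarrow> complex mat" where
  "liouv L \<rho> = mat (2 ^ nq L) (2 ^ nq L)
      (\<lambda>(i, j). \<Sum>s\<in>sites L. (chanT L s \<rho> - \<rho>) $$ (i, j))"

definition exp_liouv :: "nat \<Rightarrow> real \<Rightarrow> complex mat \<Rightarrow> complex mat" where
  "exp_liouv L t \<rho> = mat (2 ^ nq L) (2 ^ nq L)
      (\<lambda>(i, j). \<Sum>k. (complex_of_real (t ^ k / fact k)) * (((liouv L) ^^ k) \<rho>) $$ (i, j))"

definition qA1 :: "nat \<Rightarrow> nat" where "qA1 L = hq L 0 1"
definition qA2 :: "nat \<Rightarrow> nat" where "qA2 L = uq L 1 0"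
definition qB :: "nat \<Rightarrow> nat set" where
  "qB L = {hq L 0 y | y. 0 \<le> y \<and> y < int L \<and> cmod L y \<noteq> cmod L 1}"
definition qC :: "nat \<Rightarrow> nat set" where
  "qC L = {hq L x 1 | x. 0 \<le> x \<and> x < int L \<and> cmod L x \<noteq> 0}"
definition qB' :: "nat \<Rightarrow> nat set" where
  "qB' L = {uq L x 0 | x. 0 \<le> x \<and> x < int L \<and> cmod L x \<noteq> cmod L 1}"
definition qC' :: "nat \<Rightarrow> nat set" where
  "qC' L = {uq L 1 y | y. 0 \<le> y \<and> y < int L \<and> cmod L y \<noteq> 0}"
definition qD :: "nat \<Rightarrow> nat set" where
  "qD L = {0..<nq L} - ({qA1 L, qA2 L} \<union> qB L \<union> qC L \<union> qB' L \<union> qC' L)"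

definition logX1 :: "nat \<Rightarrow> complex mat" where
  "logX1 L = prod_on (nq L) sigX (qA1 L # sorted_list_of_set (qB L))"
definition logZ1 :: "nat \<Rightarrow> complex mat" where
  "logZ1 L = prod_on (nq L) sigZ (qA1 L # sorted_list_of_set (qC L))"
definition logX2 :: "nat \<Rightarrow> complex mat" where
  "logX2 L = prod_on (nq L) sigX (qA2 L # sorted_list_of_set (qB' L))"
definition logZ2 :: "nat \<Rightarrow> complex mat" where
  "logZ2 L = prod_on (nq L) sigZ (qA2 L # sorted_list_of_set (qC' L))"

definition logical1 :: "nat \<Rightarrow> pauli \<Rightarrow> complex mat" where
  "logical1 L P = (case P of PI \<Rightarrow> 1\<^sub>m (2 ^ nq L) | PX \<Rightarrow> logX1 L | PZ \<Rightarrow> logZ1 L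
      | PY \<Rightarrow> \<i> \<cdot>\<^sub>m (logX1 L * logZ1 L))"
definition logical2 :: "nat \<Rightarrow> pauli \<Rightarrow> complex mat" where
  "logical2 L P = (case P of PI \<Rightarrow> 1\<^sub>m (2 ^ nq L) | PX \<Rightarrow> logX2 L | PZ \<Rightarrow> logZ2 L
      | PY \<Rightarrow> \<i> \<cdot>\<^sub>m (logX2 L * logZ2 L))"

definition logical :: "nat \<Rightarrow> pauli \<Rightarrow> pauli \<Rightarrow> complex mat" where
  "logical L P1 P2 = logical1 L P1 * logical2 L P2"

definition dIndex :: "nat \<Rightarrow> nat \<Rightarrow> nat" where
  "dIndex L i = (let ds = sorted_list_of_set (qD L) in
      \<Sum>k<length ds. bit_of (ds ! k) i * 2 ^ k)"

definition is_density :: "nat \<Rightarrow> complex mat \<Rightarrow> bool" where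
  "is_density n \<rho> \<longleftrightarrow> \<rho> \<in> carrier_mat n n \<and> mtrace \<rho> = 1 \<and>
     (\<forall>v \<in> carrier_vec n. conjugate v \<bullet> (\<rho> *\<^sub>v v) \<ge> 0)"

text \<open>rho_0 = |Psi><Psi|_A (x) |+><+|_{BB'} (x) |0><0|_{CC'} (x) rho_D; the A-register index
 is 2*(bit of A1) + (bit of A2).\<close>
definition rho0 :: "nat \<Rightarrow> complex vec \<Rightarrow> complex mat \<Rightarrow> complex mat" where
  "rho0 L \<Psi> \<rho>D = mat (2 ^ nq L) (2 ^ nq L) (\<lambda>(i, j).
      (\<Psi> $ (2 * bit_of (qA1 L) i + bit_of (qA2 L) i)) * cnj (\<Psi> $ (2 * bit_of (qA1 L) j + bit_of (qA2 L) j))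
    * (\<Prod>q\<in>qB L \<union> qB' L. (1/2 :: complex))
    * (\<Prod>q\<in>qC L \<union> qC' L. (if bit_of q i = 0 \<and> bit_of q j = 0 then 1 else 0))
    * \<rho>D $$ (dIndex L i, dIndex L j))"

end

theory Submission
  imports Defs
begin

text \<open>The logical observable \<open>P\<close>, the stabilizers and the corrections are all, up to a phase,
  Pauli strings \<open>X\<^sub>S Z\<^sub>T\<close> indexed by two sets of qubits, so their products and commutation relations
  reduce to set arithmetic. \<open>P\<close> commutes with every stabilizer (a plaquette or star meets each
  logical line in zero or two edges) and with every correction (no correction touches a logical
  line; this is what the special plaquette \<open>p\<^sub>*\<close> and vertex \<open>v\<^sub>*\<close> are for). Cyclicity of the trace
  then gives \<open>tr (P T\<^sub>j \<rho>) = tr (P \<rho>)\<close> for each channel, hence \<open>tr (P \<L> \<rho>) = 0\<close>, and every term of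
  the exponential series but the zeroth vanishes under \<open>tr (P \<cdot>)\<close>. Finally \<open>tr (P \<rho>\<^sub>0)\<close> factorizes:
  on \<open>BB'\<close> the observable acts by X and on \<open>CC'\<close> by Z, which fix \<open>|+\<rangle>\<close> and \<open>|0\<rangle>\<close>,
  it acts trivially on \<open>D\<close>, and what remains is \<open>\<langle>\<Psi>|P\<^sub>1 \<otimes> P\<^sub>2|\<Psi>\<rangle>\<close>.\<close>

section \<open>Binary encoding of basis indices\<close>

definition bit_vals :: "nat set" where "bit_vals = {0,1}"
definition from_bits :: "nat \<Rightarrow> (nat \<Rightarrow> nat) \<Rightarrow> nat" where "from_bits n v = (\<Sum>q<n. v q * 2^q)"
definition to_bits :: "nat \<Rightarrow> nat \<Rightarrow> nat \<Rightarrow> nat" where "to_bits n i = (\<lambda>q\<in>{..<n}. bit_of q i)"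

lemma bit_of_le1: "bit_of q i \<le> 1"
  unfolding bit_of_def by simp

lemma bit_of_in_bit_vals[simp]: "bit_of q i \<in> bit_vals"
  unfolding bit_of_def bit_vals_def by auto

lemma bit_of_cases: "bit_of r i = 0 \<or> bit_of r i = 1"
  using bit_of_le1[of r i] by auto

lemma bit_of_le_Suc0[simp]: "bit_of r i \<le> Suc 0"
  using bit_of_le1[of r i] by auto

lemma from_bits_Suc: "from_bits (Suc n) v = from_bits n v + v n * 2^n"
  unfolding from_bits_def by simp

lemma from_bits_less: "(\<And>q. q<n \<Longrightarrow> v q \<le> 1) \<Longrightarrow> from_bits n v < 2^n"
proof (induction n)
  case 0 then show ?case by (simp add: from_bits_def)
next
  case (Suc n)
  have "from_bits n v < 2^n" using Suc by auto
  moreover have "v n \<le> 1" using Suc by auto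
  ultimately have "from_bits n v + v n * 2^n < 2^n + 1 * 2^n"
    by (metis add_less_le_mono mult_le_mono1)
  then show ?case by (simp add: from_bits_Suc)
qed

lemma bit_of_add_high:
  assumes "r < n" shows "bit_of r (a + c * 2^n) = bit_of r a"
proof -
  have "(2::nat)^n = 2^r * 2 * 2^(n - Suc r)"
    using assms by (metis power_add power_Suc2 Suc_leI le_add_diff_inverse)
  then have e: "a + c * 2^n = a + (2 * (c * 2^(n - Suc r))) * 2^r" by simp
  have "(a + (2 * (c * 2^(n - Suc r))) * 2^r) div 2^r = (2 * (c * 2^(n - Suc r))) + a div 2^r"
    by (rule div_mult_self1; simp)
  then have "(a + c * 2^n) div 2^r = a div 2^r + 2 * (c * 2^(n - Suc r))"
    by (simp only: e)
  then show ?thesis unfolding bit_of_def by simp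
qed

lemma bit_of_add_top:
  assumes "a < 2^n" "c \<le> 1" shows "bit_of n (a + c * 2^n) = c"
proof -
  have "(a + c * 2^n) div 2^n = c" using assms by simp
  then show ?thesis unfolding bit_of_def using assms by simp
qed

lemma bit_of_from_bits:
  "(\<And>q. q<n \<Longrightarrow> v q \<le> 1) \<Longrightarrow> r < n \<Longrightarrow> bit_of r (from_bits n v) = v r"
proof (induction n)
  case 0 then show ?case by simp
next
  case (Suc n)
  have lt: "from_bits n v < 2^n" using Suc.prems by (intro from_bits_less) auto
  show ?case
  proof (cases "r < n")
    case True
    then show ?thesis using Suc by (simp add: from_bits_Suc bit_of_add_high)
  next
    case False
    then have "r = n" using Suc by auto
    then show ?thesis using lt Suc.prems by (simp add: from_bits_Suc bit_of_add_top)
  qed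
qed

lemma from_bits_bit_of: "from_bits n (\<lambda>q. bit_of q i) = i mod 2^n"
proof (induction n)
  case 0 then show ?case by (simp add: from_bits_def)
next
  case (Suc n)
  have "i mod (2^n * 2) = 2^n * (i div 2^n mod 2) + i mod 2^n"
    by (rule mod_mult2_eq)
  then show ?case using Suc by (simp add: from_bits_Suc bit_of_def mult.commute)
qed

lemma from_bits_cong: "(\<And>q. q<n \<Longrightarrow> v q = w q) \<Longrightarrow> from_bits n v = from_bits n w"
  unfolding from_bits_def by auto

lemma from_bits_to_bits: "i < 2^n \<Longrightarrow> from_bits n (to_bits n i) = i"
proof -
  assume "i < 2^n"
  have "from_bits n (to_bits n i) = from_bits n (\<lambda>q. bit_of q i)" by (rule from_bits_cong) (simp add: to_bits_def)
  then show ?thesis using from_bits_bit_of[of n i] \<open>i < 2^n\<close> by simp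
qed

lemma bit_of_inject:
  assumes "i < 2^n" "j < 2^n" "\<And>r. r<n \<Longrightarrow> bit_of r i = bit_of r j"
  shows "i = j"
proof -
  have "from_bits n (\<lambda>q. bit_of q i) = from_bits n (\<lambda>q. bit_of q j)" by (rule from_bits_cong) (use assms in auto)
  then show ?thesis using from_bits_bit_of[of n i] from_bits_bit_of[of n j] assms by simp
qed

lemma PiE_bit_vals_le1: "v \<in> PiE A (\<lambda>_. bit_vals) \<Longrightarrow> q \<in> A \<Longrightarrow> v q \<le> 1"
  unfolding bit_vals_def by (auto simp: PiE_def Pi_def)

lemma sum_pow2_bit_vectors:
  "(\<Sum>i<2^n. f i) = (\<Sum>v\<in>PiE {..<n} (\<lambda>_. bit_vals). f (from_bits n v))"
proof (rule sum.reindex_bij_witness[where i="from_bits n" and j="to_bits n"])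
  fix v assume v: "v \<in> PiE {..<n} (\<lambda>_. bit_vals)"
  have le: "\<And>q. q<n \<Longrightarrow> v q \<le> 1" using PiE_bit_vals_le1[OF v] by simp
  show "to_bits n (from_bits n v) = v"
  proof
    fix q show "to_bits n (from_bits n v) q = v q"
    proof (cases "q < n")
      case True then show ?thesis using bit_of_from_bits[of n v q, OF le] by (simp add: to_bits_def)
    next
      case False then show ?thesis using PiE_arb[OF v, of q] by (simp add: to_bits_def)
    qed
  qed
  show "from_bits n v \<in> {..<2^n}" using from_bits_less[of n v] le by simp
next
  fix a assume "a \<in> {..<(2::nat)^n}"
  then show "from_bits n (to_bits n a) = a" by (simp add: from_bits_to_bits)
  then show "f (from_bits n (to_bits n a)) = f a" by simp
next
  fix a assume "a \<in> {..<(2::nat)^n}"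
  show "to_bits n a \<in> PiE {..<n} (\<lambda>_. bit_vals)" unfolding to_bits_def by (rule restrict_PiE_iff[THEN iffD2]) simp
qed

lemma prod_split_pair:
  assumes "a \<noteq> b" "finite T"
  shows "prod f T = (if a \<in> T then f a else 1) * (if b \<in> T then f b else 1) * prod f (T - {a,b})"
proof -
  have "prod f T = prod f (T \<inter> {a,b}) * prod f (T - {a,b})"
    by (rule prod.Int_Diff[OF assms(2)])
  moreover have "prod f (T \<inter> {a,b}) = (if a \<in> T then f a else 1) * (if b \<in> T then f b else 1)"
  proof (cases "a \<in> T"; cases "b \<in> T")
    assume "a \<in> T" "b \<in> T" then have "T \<inter> {a,b} = {a,b}" by auto
    then show ?thesis using assms \<open>a \<in> T\<close> \<open>b \<in> T\<close> by simp
  next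
    assume "a \<in> T" "b \<notin> T" then have "T \<inter> {a,b} = {a}" by auto
    then show ?thesis using \<open>a \<in> T\<close> \<open>b \<notin> T\<close> by simp
  next
    assume "a \<notin> T" "b \<in> T" then have "T \<inter> {a,b} = {b}" by auto
    then show ?thesis using \<open>a \<notin> T\<close> \<open>b \<in> T\<close> by simp
  next
    assume "a \<notin> T" "b \<notin> T" then have "T \<inter> {a,b} = {}" by auto
    then show ?thesis using \<open>a \<notin> T\<close> \<open>b \<notin> T\<close> by simp
  qed
  ultimately show ?thesis by simp
qed

lemma sum_PiE_insert:
  assumes "a \<notin> S"
  shows "(\<Sum>v\<in>PiE (insert a S) B. F v) = (\<Sum>y\<in>B a. \<Sum>g\<in>PiE S B. F (g(a := y)))"
proof -
  have "(\<Sum>(y,g)\<in>B a \<times> PiE S B. F (g(a := y))) = (\<Sum>v\<in>PiE (insert a S) B. F v)"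
    using assms
    by (intro sum.reindex_bij_witness[of _ "\<lambda>g. (g a, g(a := undefined))" "\<lambda>(y,g). g(a := y)"])
       (auto simp: PiE_def extensional_def)
  then have "(\<Sum>v\<in>PiE (insert a S) B. F v) = (\<Sum>(y,g)\<in>B a \<times> PiE S B. F (g(a := y)))" ..
  also have "\<dots> = (\<Sum>y\<in>B a. \<Sum>g\<in>PiE S B. F (g(a := y)))"
    by (subst sum.cartesian_product) simp
  finally show ?thesis .
qed

definition merge_on :: "'a set \<Rightarrow> ('a \<Rightarrow> 'b) \<Rightarrow> ('a \<Rightarrow> 'b) \<Rightarrow> 'a \<Rightarrow> 'b" where
  "merge_on X x y = (\<lambda>q. if q \<in> X then x q else y q)"

lemma sum_PiE_union:
  assumes "X \<inter> Y = {}"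
  shows "(\<Sum>v\<in>PiE (X \<union> Y) B. F v) = (\<Sum>x\<in>PiE X B. \<Sum>y\<in>PiE Y B. F (merge_on X x y))"
proof -
  have "(\<Sum>v\<in>PiE (X \<union> Y) B. F v) = (\<Sum>(x,y)\<in>PiE X B \<times> PiE Y B. F (merge_on X x y))"
  proof (rule sum.reindex_bij_witness[symmetric, of _ "\<lambda>v. (restrict v X, restrict v Y)" "\<lambda>(x,y). merge_on X x y"])
    fix xy assume "xy \<in> PiE X B \<times> PiE Y B"
    then obtain x y where xy: "xy = (x,y)" "x \<in> PiE X B" "y \<in> PiE Y B" by auto
    show "(\<lambda>v. (restrict v X, restrict v Y)) ((\<lambda>(x,y). merge_on X x y) xy) = xy"
    proof -
      have "restrict (merge_on X x y) X = x"
        using xy by (auto simp: merge_on_def restrict_def PiE_def extensional_def)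
      moreover have "restrict (merge_on X x y) Y = y"
        by (rule ext) (use xy assms in \<open>auto simp: merge_on_def restrict_def PiE_def extensional_def\<close>)
      ultimately show ?thesis using xy by simp
    qed
    show "(\<lambda>(x,y). merge_on X x y) xy \<in> PiE (X \<union> Y) B"
      using xy by (auto simp: merge_on_def PiE_def extensional_def Pi_def)
  next
    fix v assume v: "v \<in> PiE (X \<union> Y) B"
    show "(\<lambda>(x,y). merge_on X x y) (restrict v X, restrict v Y) = v"
      using v by (auto simp: merge_on_def restrict_def PiE_def extensional_def)
    show "(restrict v X, restrict v Y) \<in> PiE X B \<times> PiE Y B"
      using v by (auto simp: PiE_def Pi_def)
  qed auto
  also have "\<dots> = (\<Sum>x\<in>PiE X B. \<Sum>y\<in>PiE Y B. F (merge_on X x y))"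
    by (subst sum.cartesian_product) simp
  finally show ?thesis .
qed

lemma sum_bits_split_pair:
  fixes H :: "nat \<Rightarrow> nat \<Rightarrow> complex" and W :: "(nat \<Rightarrow> nat) \<Rightarrow> complex"
  assumes ab: "a < n" "b < n" "a \<noteq> b"
    and W_cong: "\<And>v w. (\<And>q. q \<in> {..<n} - {a,b} \<Longrightarrow> v q = w q) \<Longrightarrow> W v = W w"
  shows "(\<Sum>i<2^n. H (bit_of a i) (bit_of b i) * W (\<lambda>r. bit_of r i))
       = (\<Sum>u\<in>bit_vals. \<Sum>v\<in>bit_vals. H u v) * (\<Sum>h\<in>PiE ({..<n} - {a,b}) (\<lambda>_. bit_vals). W h)"
proof -
  let ?R = "{..<n} - {a,b}"
  have "(\<Sum>i<2^n. H (bit_of a i) (bit_of b i) * W (\<lambda>r. bit_of r i))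
      = (\<Sum>v\<in>PiE {..<n} (\<lambda>_. bit_vals). H (bit_of a (from_bits n v)) (bit_of b (from_bits n v)) * W (\<lambda>r. bit_of r (from_bits n v)))"
    by (rule sum_pow2_bit_vectors)
  also have "\<dots> = (\<Sum>v\<in>PiE {..<n} (\<lambda>_. bit_vals). H (v a) (v b) * W v)"
  proof (rule sum.cong[OF refl])
    fix v assume v: "v \<in> PiE {..<n} (\<lambda>_. bit_vals)"
    have le: "\<And>q. q < n \<Longrightarrow> v q \<le> 1" using PiE_bit_vals_le1[OF v] by simp
    have "W (\<lambda>r. bit_of r (from_bits n v)) = W v" by (rule W_cong) (use bit_of_from_bits[OF le] in auto)
    then show "H (bit_of a (from_bits n v)) (bit_of b (from_bits n v)) * W (\<lambda>r. bit_of r (from_bits n v)) = H (v a) (v b) * W v"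
      using bit_of_from_bits[OF le] ab by simp
  qed
  also have "{..<n} = insert a (insert b ?R)" using ab by auto
  also have "(\<Sum>v\<in>PiE (insert a (insert b ?R)) (\<lambda>_. bit_vals). H (v a) (v b) * W v)
      = (\<Sum>y1\<in>bit_vals. \<Sum>g\<in>PiE (insert b ?R) (\<lambda>_. bit_vals). H y1 (g b) * W (g(a := y1)))"
    using ab by (subst sum_PiE_insert) auto
  also have "\<dots> = (\<Sum>y1\<in>bit_vals. \<Sum>y2\<in>bit_vals. \<Sum>h\<in>PiE ?R (\<lambda>_. bit_vals). H y1 y2 * W (h(b := y2, a := y1)))"
    using ab by (intro sum.cong refl, subst sum_PiE_insert) auto
  also have "\<dots> = (\<Sum>y1\<in>bit_vals. \<Sum>y2\<in>bit_vals. \<Sum>h\<in>PiE ?R (\<lambda>_. bit_vals). H y1 y2 * W h)"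
  proof (intro sum.cong refl)
    fix y1 y2 h
    have "W (h(b := y2, a := y1)) = W h" by (rule W_cong) auto
    then show "H y1 y2 * W (h(b := y2, a := y1)) = H y1 y2 * W h" by simp
  qed
  also have "\<dots> = (\<Sum>u\<in>bit_vals. \<Sum>v\<in>bit_vals. H u v) * (\<Sum>h\<in>PiE ?R (\<lambda>_. bit_vals). W h)"
    by (simp only: sum_distrib_left[symmetric] sum_distrib_right)
  finally show ?thesis .
qed

definition index_of_bits :: "nat list \<Rightarrow> (nat \<Rightarrow> nat) \<Rightarrow> nat" where
  "index_of_bits ds h = (\<Sum>k<length ds. h (ds ! k) * 2 ^ k)"


lemma finite_bit_vals[simp]: "finite bit_vals"
  by (simp add: bit_vals_def)

lemma card_PiE_bit_vals: "finite X \<Longrightarrow> card (PiE X (\<lambda>_. bit_vals)) = 2 ^ card X"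
  by (simp add: card_PiE bit_vals_def numeral_2_eq_2)

lemma bij_betw_PiE_nth:
  assumes ds: "distinct ds" and B: "finite B"
  shows "bij_betw (\<lambda>d. restrict (\<lambda>k. d (ds ! k)) {..<length ds}) (PiE (set ds) (\<lambda>_. B)) (PiE {..<length ds} (\<lambda>_. B))"
proof -
  define g where "g d = restrict (\<lambda>k. d (ds ! k)) {..<length ds}" for d :: "'a \<Rightarrow> 'b"
  have inj: "inj_on g (PiE (set ds) (\<lambda>_. B))"
  proof (rule inj_onI)
    fix d1 d2 assume d1: "d1 \<in> PiE (set ds) (\<lambda>_. B)" and d2: "d2 \<in> PiE (set ds) (\<lambda>_. B)" and e: "g d1 = g d2"
    show "d1 = d2"
    proof (rule ext)
      fix q show "d1 q = d2 q"
      proof (cases "q \<in> set ds")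
        case True
        then obtain k where k: "k < length ds" "ds ! k = q" by (auto simp: in_set_conv_nth)
        have "g d1 k = g d2 k" using e by simp
        then show ?thesis using k unfolding g_def by simp
      next
        case False then show ?thesis using PiE_arb[OF d1 False] PiE_arb[OF d2 False] by simp
      qed
    qed
  qed
  have sub: "g ` PiE (set ds) (\<lambda>_. B) \<subseteq> PiE {..<length ds} (\<lambda>_. B)"
  proof
    fix w assume "w \<in> g ` PiE (set ds) (\<lambda>_. B)"
    then obtain d where d: "d \<in> PiE (set ds) (\<lambda>_. B)" and w: "w = g d" by auto
    show "w \<in> PiE {..<length ds} (\<lambda>_. B)"
      unfolding w g_def by (auto simp: restrict_PiE_iff intro!: PiE_mem[OF d])
  qed
  have "card (g ` PiE (set ds) (\<lambda>_. B)) = card (PiE {..<length ds} (\<lambda>_. B))"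
    using card_image[OF inj] distinct_card[OF ds] B by (simp add: card_PiE)
  then have "g ` PiE (set ds) (\<lambda>_. B) = PiE {..<length ds} (\<lambda>_. B)"
    using card_subset_eq[OF _ sub] B by (simp add: finite_PiE)
  then show ?thesis using inj unfolding bij_betw_def g_def by simp
qed

lemma sum_PiE_index_of_bits:
  fixes \<rho>D :: "complex mat"
  assumes D: "finite D" and ds: "ds = sorted_list_of_set D"
  shows "(\<Sum>d\<in>PiE D (\<lambda>_. bit_vals). \<rho>D $$ (index_of_bits ds d, index_of_bits ds d)) = (\<Sum>m<2 ^ card D. \<rho>D $$ (m, m))"
proof -
  let ?k = "card D"
  let ?g = "\<lambda>d. restrict (\<lambda>k. d (ds ! k)) {..<length ds}"
  have len: "length ds = ?k" and setds: "set ds = D" using ds D by simp_all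
  have bij: "bij_betw ?g (PiE D (\<lambda>_. bit_vals)) (PiE {..<?k} (\<lambda>_. bit_vals))"
    using bij_betw_PiE_nth[of ds bit_vals] ds D unfolding len setds by simp
  have "index_of_bits ds d = from_bits ?k (?g d)" for d
    unfolding index_of_bits_def from_bits_def len by simp
  then have "(\<Sum>d\<in>PiE D (\<lambda>_. bit_vals). \<rho>D $$ (index_of_bits ds d, index_of_bits ds d))
      = (\<Sum>w\<in>PiE {..<?k} (\<lambda>_. bit_vals). \<rho>D $$ (from_bits ?k w, from_bits ?k w))"
    using sum.reindex_bij_betw[OF bij, of "\<lambda>w. \<rho>D $$ (from_bits ?k w, from_bits ?k w)"] by simp
  also have "\<dots> = (\<Sum>m<2 ^ ?k. \<rho>D $$ (m, m))"
    by (rule sum_pow2_bit_vectors[symmetric])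
  finally show ?thesis .
qed

lemma sum_PiE_indicator_zero: "finite CC \<Longrightarrow> (\<Sum>c\<in>PiE CC (\<lambda>_. bit_vals). \<Prod>q\<in>CC. if c q = 0 then 1 else (0::complex)) = 1"
proof -
  assume f: "finite CC"
  have "(\<Prod>q\<in>CC. \<Sum>y\<in>bit_vals. if y = 0 then 1 else (0::complex)) = (\<Sum>c\<in>PiE CC (\<lambda>_. bit_vals). \<Prod>q\<in>CC. if c q = 0 then 1 else (0::complex))"
    by (rule prod_sum_PiE) (use f in \<open>auto simp: bit_vals_def\<close>)
  moreover have "(\<Prod>q\<in>CC. \<Sum>y\<in>bit_vals. if y = 0 then 1 else (0::complex)) = 1"
    by (simp add: bit_vals_def)
  ultimately show ?thesis by simp
qed

lemma sum_PiE_union_product: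
  assumes XY: "X \<inter> Y = {}"
    and G: "\<And>v w. (\<And>q. q \<in> X \<Longrightarrow> v q = w q) \<Longrightarrow> G v = G w"
    and H: "\<And>v w. (\<And>q. q \<in> Y \<Longrightarrow> v q = w q) \<Longrightarrow> H v = H w"
  shows "(\<Sum>v\<in>PiE (X \<union> Y) B. G v * H v) = (\<Sum>x\<in>PiE X B. G x) * (\<Sum>y\<in>PiE Y B. (H y :: 'c::comm_semiring_1))"
proof -
  have "G (merge_on X x y) = G x" "H (merge_on X x y) = H y" for x y
    using XY by (auto intro!: G H simp: merge_on_def)
  then show ?thesis unfolding sum_PiE_union[OF XY] by (simp add: sum_product)
qed

lemma sum_PiE_rest_weight:
  fixes \<rho>D :: "complex mat"
  assumes fin: "finite BB" "finite CC" "finite D"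
    and disj: "BB \<inter> (CC \<union> D) = {}" "CC \<inter> D = {}"
    and ds: "ds = sorted_list_of_set D"
    and tr: "dim_row \<rho>D = 2 ^ card D" "mtrace \<rho>D = 1"
  shows "(\<Sum>h\<in>PiE (BB \<union> (CC \<union> D)) (\<lambda>_. bit_vals).
      (\<Prod>q\<in>BB. (1/2::complex)) * (\<Prod>q\<in>CC. if h q = 0 then 1 else 0) * \<rho>D $$ (index_of_bits ds h, index_of_bits ds h)) = 1"
proof -
  have ds_D: "ds ! k \<in> D" if "k < length ds" for k using that ds fin(3) nth_mem[of k ds] by simp
  have idx_cong: "index_of_bits ds v = index_of_bits ds w" if "\<And>q. q \<in> D \<Longrightarrow> v q = w q" for v w
    unfolding index_of_bits_def using that ds_D by simp
  have ind_cong: "(\<Prod>q\<in>CC. if v q = 0 then 1 else (0::complex)) = (\<Prod>q\<in>CC. if w q = 0 then 1 else 0)"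
    if "\<And>q. q \<in> CC \<Longrightarrow> v q = w q" for v w
    using that by (intro prod.cong) simp_all
  have rho_cong: "\<rho>D $$ (index_of_bits ds v, index_of_bits ds v) = \<rho>D $$ (index_of_bits ds w, index_of_bits ds w)"
    if "\<And>q. q \<in> D \<Longrightarrow> v q = w q" for v w
    using idx_cong[OF that] by simp
  have rest_cong: "(\<Prod>q\<in>CC. if v q = 0 then 1 else (0::complex)) * \<rho>D $$ (index_of_bits ds v, index_of_bits ds v)
      = (\<Prod>q\<in>CC. if w q = 0 then 1 else 0) * \<rho>D $$ (index_of_bits ds w, index_of_bits ds w)"
    if "\<And>q. q \<in> CC \<union> D \<Longrightarrow> v q = w q" for v w
    using that idx_cong[of v w] by (intro arg_cong2[where f="(*)"] prod.cong) (simp_all add: that)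
  have "(\<Sum>x\<in>PiE BB (\<lambda>_. bit_vals). (\<Prod>q\<in>BB. (1/2::complex))) = 1"
    using fin(1) by (simp add: card_PiE_bit_vals power_mult_distrib[symmetric])
  moreover have "(\<Sum>h\<in>PiE CC (\<lambda>_. bit_vals). \<Prod>q\<in>CC. if h q = 0 then 1 else (0::complex)) = 1"
    by (rule sum_PiE_indicator_zero[OF fin(2)])
  moreover have "(\<Sum>d\<in>PiE D (\<lambda>_. bit_vals). \<rho>D $$ (index_of_bits ds d, index_of_bits ds d)) = 1"
    using sum_PiE_index_of_bits[OF fin(3) ds] tr unfolding mtrace_def by simp
  moreover have "(\<Sum>h\<in>PiE (CC \<union> D) (\<lambda>_. bit_vals).
      (\<Prod>q\<in>CC. if h q = 0 then 1 else (0::complex)) * \<rho>D $$ (index_of_bits ds h, index_of_bits ds h))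
    = (\<Sum>h\<in>PiE CC (\<lambda>_. bit_vals). \<Prod>q\<in>CC. if h q = 0 then 1 else (0::complex))
      * (\<Sum>d\<in>PiE D (\<lambda>_. bit_vals). \<rho>D $$ (index_of_bits ds d, index_of_bits ds d))"
    by (rule sum_PiE_union_product[OF disj(2)], (rule ind_cong rho_cong, assumption)+)
  moreover have "(\<Sum>h\<in>PiE (BB \<union> (CC \<union> D)) (\<lambda>_. bit_vals).
      (\<Prod>q\<in>BB. (1/2::complex)) * ((\<Prod>q\<in>CC. if h q = 0 then 1 else 0) * \<rho>D $$ (index_of_bits ds h, index_of_bits ds h)))
    = (\<Sum>x\<in>PiE BB (\<lambda>_. bit_vals). (\<Prod>q\<in>BB. (1/2::complex)))
      * (\<Sum>h\<in>PiE (CC \<union> D) (\<lambda>_. bit_vals).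
          (\<Prod>q\<in>CC. if h q = 0 then 1 else 0) * \<rho>D $$ (index_of_bits ds h, index_of_bits ds h))"
    by (rule sum_PiE_union_product[OF disj(1)], rule refl, rule rest_cong, assumption)
  ultimately show ?thesis by (simp add: mult.assoc)
qed

lemma index_mult_square:
  assumes "A \<in> carrier_mat N N" "B \<in> carrier_mat N N" "i < N" "j < N"
  shows "(A * B) $$ (i,j) = (\<Sum>k<N. A $$ (i,k) * B $$ (k,j))"
  using assms by (simp add: scalar_prod_def lessThan_atLeast0)

lemma sum_lessThan_single:
  assumes "k0 < N" "\<And>k. k < N \<Longrightarrow> k \<noteq> k0 \<Longrightarrow> f k = 0"
  shows "(\<Sum>k<(N::nat). f k) = (f k0 :: 'a::comm_monoid_add)"
proof -
  have "(\<Sum>k<N. f k) = (\<Sum>k\<in>{k0}. f k)"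
    by (rule sum.mono_neutral_right) (use assms in auto)
  then show ?thesis by simp
qed

text \<open>Square-matrix instances of library lemmas: with a single dimension the simplifier can
  discharge their carrier premises.\<close>

lemma assoc_mult_square: "A \<in> carrier_mat N N \<Longrightarrow> B \<in> carrier_mat N N \<Longrightarrow> C \<in> carrier_mat N N \<Longrightarrow> A * B * C = A * (B * C)"
  by (rule assoc_mult_mat)

lemma mult_carrier_square: "A \<in> carrier_mat N N \<Longrightarrow> B \<in> carrier_mat N N \<Longrightarrow> A * B \<in> carrier_mat N N"
  by (rule mult_carrier_mat)

lemma smult_mult_square: "A \<in> carrier_mat N N \<Longrightarrow> B \<in> carrier_mat N N \<Longrightarrow> (k \<cdot>\<^sub>m A) * B = (k::complex) \<cdot>\<^sub>m (A * B)"
  by (rule mult_smult_assoc_mat)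

lemma mult_smult_square: "A \<in> carrier_mat N N \<Longrightarrow> B \<in> carrier_mat N N \<Longrightarrow> A * (k \<cdot>\<^sub>m B) = (k::complex) \<cdot>\<^sub>m (A * B)"
  by (rule mult_smult_distrib)

lemma smult_smult_mat: "a \<cdot>\<^sub>m (b \<cdot>\<^sub>m A) = (a * b :: 'a::comm_semiring_1) \<cdot>\<^sub>m A"
  by (rule eq_matI) (auto simp: mult.assoc)

lemma smult_one_mat: "1 \<cdot>\<^sub>m A = (A :: complex mat)"
  by (rule eq_matI) auto

lemma smult_commute:
  assumes "A * B = B * A" "A \<in> carrier_mat N N" "B \<in> carrier_mat N N"
  shows "(c \<cdot>\<^sub>m A) * B = B * (c \<cdot>\<^sub>m A :: complex mat)"
  using assms by (simp add: smult_mult_square[where N=N] mult_smult_square[where N=N])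

lemma mat_adjoint_index:
  assumes "A \<in> carrier_mat N N" "i < N" "j < N"
  shows "mat_adjoint A $$ (i,j) = cnj (A $$ (j,i))"
  using assms unfolding mat_adjoint_def by (simp add: mat_of_rows_index)

lemma mat_adjoint_carrier: "A \<in> carrier_mat N N \<Longrightarrow> mat_adjoint A \<in> carrier_mat N N"
  unfolding mat_adjoint_def by (simp add: mat_of_rows_def)

lemma mat_adjoint_eqI:
  assumes "A \<in> carrier_mat N N" "\<And>i j. i < N \<Longrightarrow> j < N \<Longrightarrow> cnj (A $$ (j,i)) = A $$ (i,j)"
  shows "mat_adjoint A = A"
  by (rule eq_matI) (use assms mat_adjoint_carrier[OF assms(1)] in \<open>auto simp: mat_adjoint_index\<close>)

section \<open>Pauli strings\<close>

definition differ_on :: "nat \<Rightarrow> nat set \<Rightarrow> nat \<Rightarrow> nat \<Rightarrow> bool" where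
  "differ_on n S i j \<longleftrightarrow> (\<forall>r<n. (bit_of r i = bit_of r j) = (r \<notin> S))"

definition pauli_X :: "nat \<Rightarrow> nat set \<Rightarrow> complex mat" where
  "pauli_X n S = mat (2^n) (2^n) (\<lambda>(i,j). if differ_on n S i j then 1 else 0)"

definition z_sign :: "nat set \<Rightarrow> nat \<Rightarrow> complex" where
  "z_sign T i = (\<Prod>r\<in>T. if bit_of r i = 1 then -1 else 1)"

definition pauli_Z :: "nat \<Rightarrow> nat set \<Rightarrow> complex mat" where
  "pauli_Z n T = mat (2^n) (2^n) (\<lambda>(i,j). if i = j then z_sign T i else 0)"

definition flip_bits :: "nat \<Rightarrow> nat set \<Rightarrow> nat \<Rightarrow> nat" where
  "flip_bits n S i = from_bits n (\<lambda>r. if r \<in> S then 1 - bit_of r i else bit_of r i)"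

definition sym_diff :: "'a set \<Rightarrow> 'a set \<Rightarrow> 'a set" where "sym_diff S T = (S - T) \<union> (T - S)"

lemma sym_diff_commute: "sym_diff S T = sym_diff T S" unfolding sym_diff_def by auto

lemma sym_diff_self[simp]: "sym_diff S S = {}" unfolding sym_diff_def by auto

lemma sym_diff_empty[simp]: "sym_diff S {} = S" "sym_diff {} S = S" unfolding sym_diff_def by auto

lemma sym_diff_disjoint: "A \<inter> B = {} \<Longrightarrow> sym_diff A B = A \<union> B"
  unfolding sym_diff_def by auto

definition comm_sign :: "nat set \<Rightarrow> nat set \<Rightarrow> complex" where "comm_sign S T = (-1) ^ card (S \<inter> T)"

lemma comm_sign_commute: "comm_sign S T = comm_sign T S"
  unfolding comm_sign_def by (simp add: Int_commute)

lemma comm_sign_empty[simp]: "comm_sign {} T = 1" "comm_sign S {} = 1"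
  unfolding comm_sign_def by auto

lemma comm_sign_singleton: "comm_sign {q} T = (if q \<in> T then -1 else 1)"
  unfolding comm_sign_def by auto

lemma flip_bits_less: "flip_bits n S i < 2^n"
  unfolding flip_bits_def by (rule from_bits_less) (auto simp: bit_of_le1)

lemma bit_of_flip_bits: "r < n \<Longrightarrow> bit_of r (flip_bits n S i) = (if r \<in> S then 1 - bit_of r i else bit_of r i)"
  unfolding flip_bits_def by (rule bit_of_from_bits) (auto simp: bit_of_le1)

lemma differ_on_flip_bits: "differ_on n S i (flip_bits n S i)"
  unfolding differ_on_def
proof (intro allI impI)
  fix r assume r: "r < n"
  show "(bit_of r i = bit_of r (flip_bits n S i)) = (r \<notin> S)"
    using bit_of_cases[of r i] by (auto simp: bit_of_flip_bits r)
qed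

lemma differ_on_unique: assumes "differ_on n S i j" "j < 2^n" shows "j = flip_bits n S i"
proof (rule bit_of_inject[OF assms(2) flip_bits_less])
  fix r assume r: "r < n"
  show "bit_of r j = bit_of r (flip_bits n S i)"
    using assms(1) r bit_of_cases[of r i] bit_of_cases[of r j] unfolding differ_on_def
    by (auto simp: bit_of_flip_bits)
qed

lemma differ_on_iff: "j < 2^n \<Longrightarrow> differ_on n S i j \<longleftrightarrow> j = flip_bits n S i"
  using differ_on_unique differ_on_flip_bits by blast

lemma differ_on_sym: "differ_on n S i j = differ_on n S j i"
  unfolding differ_on_def by auto

lemma differ_on_empty: "i < 2^n \<Longrightarrow> j < 2^n \<Longrightarrow> differ_on n {} i j \<longleftrightarrow> i = j"
  unfolding differ_on_def using bit_of_inject[of i n j] by auto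

lemma differ_on_trans: assumes "differ_on n S i k" "differ_on n T k j" shows "differ_on n (sym_diff S T) i j"
  unfolding differ_on_def
proof (intro allI impI)
  fix r assume r: "r < n"
  have "(bit_of r i = bit_of r k) = (r \<notin> S)" "(bit_of r k = bit_of r j) = (r \<notin> T)"
    using assms r unfolding differ_on_def by auto
  then show "(bit_of r i = bit_of r j) = (r \<notin> sym_diff S T)"
    using bit_of_cases[of r i] bit_of_cases[of r j] bit_of_cases[of r k] unfolding sym_diff_def by auto
qed

lemma differ_on_cancel: assumes "differ_on n (sym_diff S T) i j" "differ_on n S i k" shows "differ_on n T k j"
  unfolding differ_on_def
proof (intro allI impI)
  fix r assume r: "r < n"
  have "(bit_of r i = bit_of r j) = (r \<notin> sym_diff S T)" "(bit_of r i = bit_of r k) = (r \<notin> S)"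
    using assms r unfolding differ_on_def by auto
  then show "(bit_of r k = bit_of r j) = (r \<notin> T)"
    using bit_of_cases[of r i] bit_of_cases[of r j] bit_of_cases[of r k] unfolding sym_diff_def by auto
qed

lemma pauli_X_dims[simp]: "dim_row (pauli_X n S) = 2^n" "dim_col (pauli_X n S) = 2^n"
  and pauli_Z_dims[simp]: "dim_row (pauli_Z n T) = 2^n" "dim_col (pauli_Z n T) = 2^n"
  unfolding pauli_X_def pauli_Z_def by auto

lemma pauli_X_carrier[simp]: "pauli_X n S \<in> carrier_mat (2^n) (2^n)"
  and pauli_Z_carrier[simp]: "pauli_Z n T \<in> carrier_mat (2^n) (2^n)"
  unfolding pauli_X_def pauli_Z_def by auto

lemma pauli_X_index: "i < 2^n \<Longrightarrow> j < 2^n \<Longrightarrow> pauli_X n S $$ (i,j) = (if differ_on n S i j then 1 else 0)"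
  unfolding pauli_X_def by simp

lemma pauli_Z_index: "i < 2^n \<Longrightarrow> j < 2^n \<Longrightarrow> pauli_Z n T $$ (i,j) = (if i = j then z_sign T i else 0)"
  unfolding pauli_Z_def by simp

lemma pauli_X_mult: "pauli_X n S * pauli_X n T = pauli_X n (sym_diff S T)"
proof (rule eq_matI)
  fix i j assume i: "i < dim_row (pauli_X n (sym_diff S T))" and j: "j < dim_col (pauli_X n (sym_diff S T))"
  then have i: "i < 2^n" and j: "j < 2^n" by auto
  have "(pauli_X n S * pauli_X n T) $$ (i,j) = (\<Sum>k<2^n. pauli_X n S $$ (i,k) * pauli_X n T $$ (k,j))"
    by (rule index_mult_square) (use i j in auto)
  also have "\<dots> = pauli_X n S $$ (i, flip_bits n S i) * pauli_X n T $$ (flip_bits n S i, j)"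
    by (rule sum_lessThan_single[OF flip_bits_less]) (auto simp: pauli_X_index differ_on_iff i)
  also have "\<dots> = (if differ_on n (sym_diff S T) i j then 1 else 0)"
    using differ_on_flip_bits[of n S i] differ_on_trans[of n S i "flip_bits n S i" T j] differ_on_cancel[of n S T i j "flip_bits n S i"]
    by (auto simp: pauli_X_index i j flip_bits_less)
  finally show "(pauli_X n S * pauli_X n T) $$ (i,j) = pauli_X n (sym_diff S T) $$ (i,j)"
    by (simp add: pauli_X_index i j)
qed auto

lemma z_sign_sym_diff:
  assumes "finite S" "finite T"
  shows "z_sign S i * z_sign T i = z_sign (sym_diff S T) i"
proof -
  let ?f = "\<lambda>r. if bit_of r i = 1 then -1 else (1::complex)"
  have sq: "?f r * ?f r = 1" for r by auto
  have "z_sign S i = prod ?f (S - T) * prod ?f (S \<inter> T)"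
    unfolding z_sign_def using prod.Int_Diff[OF assms(1), of ?f T] by (simp add: mult.commute)
  moreover have "z_sign T i = prod ?f (T - S) * prod ?f (S \<inter> T)"
    unfolding z_sign_def using prod.Int_Diff[OF assms(2), of ?f S] by (simp add: mult.commute Int_commute)
  moreover have "prod ?f (S \<inter> T) * prod ?f (S \<inter> T) = 1"
    by (simp add: prod.distrib[symmetric] sq)
  moreover have "z_sign (sym_diff S T) i = prod ?f (S - T) * prod ?f (T - S)"
    unfolding z_sign_def sym_diff_def using assms by (subst prod.union_disjoint) auto
  ultimately show ?thesis by (simp add: algebra_simps)
qed

lemma pauli_Z_mult: "finite S \<Longrightarrow> finite T \<Longrightarrow> pauli_Z n S * pauli_Z n T = pauli_Z n (sym_diff S T)"
proof (rule eq_matI)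
  fix i j assume fin: "finite S" "finite T" and i: "i < dim_row (pauli_Z n (sym_diff S T))" and j: "j < dim_col (pauli_Z n (sym_diff S T))"
  then have i: "i < 2^n" and j: "j < 2^n" by auto
  have "(pauli_Z n S * pauli_Z n T) $$ (i,j) = (\<Sum>k<2^n. pauli_Z n S $$ (i,k) * pauli_Z n T $$ (k,j))"
    by (rule index_mult_square) (use i j in auto)
  also have "\<dots> = pauli_Z n S $$ (i, i) * pauli_Z n T $$ (i, j)"
    by (rule sum_lessThan_single[OF i]) (auto simp: pauli_Z_index i)
  also have "\<dots> = pauli_Z n (sym_diff S T) $$ (i,j)"
    using z_sign_sym_diff[OF fin] by (auto simp: pauli_Z_index i j)
  finally show "(pauli_Z n S * pauli_Z n T) $$ (i,j) = pauli_Z n (sym_diff S T) $$ (i,j)" .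
qed auto

lemma z_sign_differ_on:
  assumes "differ_on n S i j" "T \<subseteq> {..<n}"
  shows "z_sign T i = comm_sign S T * z_sign T j"
proof -
  have fin: "finite T" using assms(2) finite_subset by blast
  let ?f = "\<lambda>k r. if bit_of r k = 1 then -1 else (1::complex)"
  have "z_sign T i = prod (?f i) (T - S) * prod (?f i) (T \<inter> S)"
    unfolding z_sign_def using prod.Int_Diff[OF fin, of "?f i" S] by (simp add: mult.commute)
  moreover have "z_sign T j = prod (?f j) (T - S) * prod (?f j) (T \<inter> S)"
    unfolding z_sign_def using prod.Int_Diff[OF fin, of "?f j" S] by (simp add: mult.commute)
  moreover have "prod (?f i) (T - S) = prod (?f j) (T - S)"
    using assms unfolding differ_on_def by (intro prod.cong) auto
  moreover have "prod (?f i) (T \<inter> S) = prod (\<lambda>r. - ?f j r) (T \<inter> S)"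
  proof (rule prod.cong)
    fix r assume "r \<in> T \<inter> S"
    then have "r < n" "bit_of r i \<noteq> bit_of r j" using assms unfolding differ_on_def by auto
    then show "?f i r = - ?f j r" using bit_of_cases[of r i] bit_of_cases[of r j] by auto
  qed simp
  moreover have "prod (\<lambda>r. - ?f j r) (T \<inter> S) = (-1)^card (T \<inter> S) * prod (?f j) (T \<inter> S)"
    by (simp add: prod_uminus) 
  ultimately show ?thesis unfolding comm_sign_def by (simp add: Int_commute)
qed

lemma pauli_Z_X_commute:
  assumes "T \<subseteq> {..<n}"
  shows "pauli_Z n T * pauli_X n S = comm_sign S T \<cdot>\<^sub>m (pauli_X n S * pauli_Z n T)"
proof (rule eq_matI)
  fix i j assume i: "i < dim_row (comm_sign S T \<cdot>\<^sub>m (pauli_X n S * pauli_Z n T))" and j: "j < dim_col (comm_sign S T \<cdot>\<^sub>m (pauli_X n S * pauli_Z n T))"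
  then have i: "i < 2^n" and j: "j < 2^n" by auto
  have "(pauli_Z n T * pauli_X n S) $$ (i,j) = (\<Sum>k<2^n. pauli_Z n T $$ (i,k) * pauli_X n S $$ (k,j))"
    by (rule index_mult_square) (use i j in auto)
  also have "\<dots> = pauli_Z n T $$ (i, i) * pauli_X n S $$ (i, j)"
    by (rule sum_lessThan_single[OF i]) (auto simp: pauli_Z_index i)
  also have "\<dots> = (if differ_on n S i j then z_sign T i else 0)" by (simp add: pauli_Z_index pauli_X_index i j)
  finally have 1: "(pauli_Z n T * pauli_X n S) $$ (i,j) = (if differ_on n S i j then z_sign T i else 0)" .
  have "(pauli_X n S * pauli_Z n T) $$ (i,j) = (\<Sum>k<2^n. pauli_X n S $$ (i,k) * pauli_Z n T $$ (k,j))"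
    by (rule index_mult_square) (use i j in auto)
  also have "\<dots> = pauli_X n S $$ (i, j) * pauli_Z n T $$ (j, j)"
    by (rule sum_lessThan_single[OF j]) (auto simp: pauli_Z_index j)
  also have "\<dots> = (if differ_on n S i j then z_sign T j else 0)" by (simp add: pauli_Z_index pauli_X_index i j)
  finally have 2: "(pauli_X n S * pauli_Z n T) $$ (i,j) = (if differ_on n S i j then z_sign T j else 0)" .
  show "(pauli_Z n T * pauli_X n S) $$ (i,j) = (comm_sign S T \<cdot>\<^sub>m (pauli_X n S * pauli_Z n T)) $$ (i,j)"
    using 1 2 z_sign_differ_on[OF _ assms, of S i j] i j by auto
qed auto

lemma pauli_X_empty: "pauli_X n {} = 1\<^sub>m (2^n)"
  by (rule eq_matI) (auto simp: pauli_X_index differ_on_empty)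

lemma pauli_Z_empty: "pauli_Z n {} = 1\<^sub>m (2^n)"
  by (rule eq_matI) (auto simp: pauli_Z_index z_sign_def)

lemma embed1_sigX: assumes "q < n" shows "embed1 n q sigX = pauli_X n {q}"
proof (rule eq_matI)
  fix i j assume "i < dim_row (pauli_X n {q})" "j < dim_col (pauli_X n {q})"
  then have i: "i < 2^n" and j: "j < 2^n" by auto
  have bi: "bit_of q i < 2" "bit_of q j < 2" using bit_of_cases[of q i] bit_of_cases[of q j] by auto
  have "differ_on n {q} i j \<longleftrightarrow> (\<forall>r<n. r \<noteq> q \<longrightarrow> bit_of r i = bit_of r j) \<and> bit_of q i \<noteq> bit_of q j"
    unfolding differ_on_def using assms by auto
  then show "embed1 n q sigX $$ (i, j) = pauli_X n {q} $$ (i, j)"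
    unfolding embed1_def sigX_def using i j bi by (auto simp: pauli_X_index)
qed (auto simp: embed1_def)

lemma embed1_sigZ: assumes "q < n" shows "embed1 n q sigZ = pauli_Z n {q}"
proof (rule eq_matI)
  fix i j assume "i < dim_row (pauli_Z n {q})" "j < dim_col (pauli_Z n {q})"
  then have i: "i < 2^n" and j: "j < 2^n" by auto
  have bi: "bit_of q i < 2" "bit_of q j < 2" using bit_of_cases[of q i] bit_of_cases[of q j] by auto
  have "(\<forall>r<n. r \<noteq> q \<longrightarrow> bit_of r i = bit_of r j) \<and> bit_of q i = bit_of q j \<longleftrightarrow> i = j"
    using bit_of_inject[OF i j] assms by auto
  then show "embed1 n q sigZ $$ (i, j) = pauli_Z n {q} $$ (i, j)"
    unfolding embed1_def sigZ_def using i j bi bit_of_cases[of q i]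
    by (auto simp: pauli_Z_index z_sign_def)
qed (auto simp: embed1_def)

fun odd_occ :: "nat list \<Rightarrow> nat set" where
  "odd_occ [] = {}"
| "odd_occ (q # qs) = sym_diff {q} (odd_occ qs)"

lemma finite_odd_occ[simp]: "finite (odd_occ qs)"
  by (induction qs) (auto simp: sym_diff_def)

lemma odd_occ_subset: "odd_occ qs \<subseteq> set qs"
  by (induction qs) (auto simp: sym_diff_def)

lemma odd_occ_less: "set qs \<subseteq> {..<n} \<Longrightarrow> odd_occ qs \<subseteq> {..<n}"
  using odd_occ_subset by blast

lemma odd_occ_distinct: "distinct qs \<Longrightarrow> odd_occ qs = set qs"
  by (induction qs) (auto simp: sym_diff_def)

lemma prod_on_Cons: "prod_on n M (q # qs) = embed1 n q M * prod_on n M qs"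
  unfolding prod_on_def by simp

lemma prod_on_sigX: "set qs \<subseteq> {..<n} \<Longrightarrow> prod_on n sigX qs = pauli_X n (odd_occ qs)"
proof (induction qs)
  case Nil then show ?case by (simp add: prod_on_def pauli_X_empty)
next
  case (Cons q qs)
  then show ?case by (simp add: prod_on_Cons embed1_sigX pauli_X_mult)
qed

lemma prod_on_sigZ: "set qs \<subseteq> {..<n} \<Longrightarrow> prod_on n sigZ qs = pauli_Z n (odd_occ qs)"
proof (induction qs)
  case Nil then show ?case by (simp add: prod_on_def pauli_Z_empty)
next
  case (Cons q qs)
  then show ?case by (simp add: prod_on_Cons embed1_sigZ pauli_Z_mult)
qed

definition count_in :: "nat set \<Rightarrow> nat list \<Rightarrow> nat" where
  "count_in S qs = length (filter (\<lambda>q. q \<in> S) qs)"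

lemma count_in_Nil[simp]: "count_in S [] = 0" and count_in_Cons[simp]: "count_in S (q # qs) = (if q \<in> S then Suc (count_in S qs) else count_in S qs)"
  unfolding count_in_def by auto

lemma even_card_odd_occ_count_in: "even (card (S \<inter> odd_occ qs) + count_in S qs)"
proof (induction qs)
  case Nil then show ?case by simp
next
  case (Cons q qs)
  let ?X = "odd_occ qs"
  have fin: "finite (S \<inter> ?X)" by simp
  show ?case
  proof (cases "q \<in> S")
    case False
    then have "S \<inter> odd_occ (q # qs) = S \<inter> ?X" by (auto simp: sym_diff_def)
    then show ?thesis using Cons False by simp
  next
    case qS: True
    show ?thesis
    proof (cases "q \<in> ?X")
      case True
      then have e: "S \<inter> odd_occ (q # qs) = (S \<inter> ?X) - {q}" by (auto simp: sym_diff_def)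
      have "card (S \<inter> ?X) \<ge> 1" using True qS fin by (metis IntI card_0_eq empty_iff less_one linorder_not_less)
      then show ?thesis using Cons qS True e fin by (simp add: card_Diff_singleton)
    next
      case False
      then have e: "S \<inter> odd_occ (q # qs) = insert q (S \<inter> ?X)" using qS by (auto simp: sym_diff_def)
      then show ?thesis using Cons qS False fin by simp
    qed
  qed
qed

lemma comm_sign_odd_occ: "comm_sign S (odd_occ qs) = (-1) ^ count_in S qs"
proof -
  have "even (card (S \<inter> odd_occ qs) + count_in S qs)" by (rule even_card_odd_occ_count_in)
  then show ?thesis unfolding comm_sign_def
    by (metis (no_types, lifting) add.commute minus_one_power_iff odd_add)
qed

definition pauli_string :: "nat \<Rightarrow> nat set \<Rightarrow> nat set \<Rightarrow> complex mat" where
  "pauli_string n S T = pauli_X n S * pauli_Z n T"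

lemma pauli_string_carrier[simp]: "pauli_string n S T \<in> carrier_mat (2^n) (2^n)"
  unfolding pauli_string_def by (rule mult_carrier_mat) auto

lemma pauli_string_mult:
  assumes "T \<subseteq> {..<n}" "finite T" "finite T'"
  shows "pauli_string n S T * pauli_string n S' T' = comm_sign S' T \<cdot>\<^sub>m pauli_string n (sym_diff S S') (sym_diff T T')"
proof -
  have "pauli_string n S T * pauli_string n S' T' = pauli_X n S * ((pauli_Z n T * pauli_X n S') * pauli_Z n T')"
    unfolding pauli_string_def by (simp add: assoc_mult_square[where N="2^n"] mult_carrier_square[where N="2^n"])
  also have "\<dots> = pauli_X n S * ((comm_sign S' T \<cdot>\<^sub>m (pauli_X n S' * pauli_Z n T)) * pauli_Z n T')"
    by (simp add: pauli_Z_X_commute[OF assms(1)])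
  also have "\<dots> = comm_sign S' T \<cdot>\<^sub>m ((pauli_X n S * pauli_X n S') * (pauli_Z n T * pauli_Z n T'))"
    by (simp add: smult_mult_square[where N="2^n"] mult_smult_square[where N="2^n"] assoc_mult_square[where N="2^n"] mult_carrier_square[where N="2^n"])
  finally show ?thesis unfolding pauli_string_def by (simp add: pauli_X_mult pauli_Z_mult assms)
qed

lemma pauli_string_empty: "pauli_string n {} {} = 1\<^sub>m (2^n)"
  unfolding pauli_string_def by (simp add: pauli_X_empty pauli_Z_empty)

lemma pauli_string_commute:
  assumes "T \<subseteq> {..<n}" "T' \<subseteq> {..<n}" "comm_sign S' T = comm_sign S T'"
  shows "pauli_string n S T * pauli_string n S' T' = pauli_string n S' T' * pauli_string n S T"
proof -
  have f: "finite T" "finite T'" using assms finite_subset by blast+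
  show ?thesis using assms f
    by (simp add: pauli_string_mult sym_diff_commute)
qed

lemma pauli_string_square:
  assumes "T \<subseteq> {..<n}" "comm_sign S T = 1"
  shows "pauli_string n S T * pauli_string n S T = 1\<^sub>m (2^n)"
proof -
  have f: "finite T" using assms finite_subset by blast
  have "1 \<cdot>\<^sub>m 1\<^sub>m (2^n) = (1\<^sub>m (2^n) :: complex mat)" by (rule eq_matI) auto
  then show ?thesis using assms f by (simp add: pauli_string_mult pauli_string_empty)
qed

lemma pauli_string_X: "pauli_string n S {} = pauli_X n S"
  unfolding pauli_string_def by (simp add: pauli_Z_empty)
lemma pauli_string_Z: "pauli_string n {} T = pauli_Z n T"
  unfolding pauli_string_def by (simp add: pauli_X_empty)

lemma mat_adjoint_pauli_X: "mat_adjoint (pauli_X n S) = pauli_X n S"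
  by (rule mat_adjoint_eqI[OF pauli_X_carrier]) (auto simp: pauli_X_index differ_on_sym)

lemma cnj_z_sign: "cnj (z_sign T i) = z_sign T i"
  unfolding z_sign_def cnj_prod by (rule prod.cong) auto

lemma mat_adjoint_pauli_Z: "mat_adjoint (pauli_Z n S) = pauli_Z n S"
  by (rule mat_adjoint_eqI[OF pauli_Z_carrier]) (auto simp: pauli_Z_index cnj_z_sign)

section \<open>Traces and pinching channels\<close>

lemma mtrace_mult:
  assumes "A \<in> carrier_mat N N" "B \<in> carrier_mat N N"
  shows "mtrace (A * B) = (\<Sum>i<N. \<Sum>k<N. A $$ (i,k) * B $$ (k,i))"
proof -
  have d: "dim_row (A * B) = N" using assms by simp
  have "mtrace (A * B) = (\<Sum>i<N. (A * B) $$ (i,i))" unfolding mtrace_def d ..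
  also have "\<dots> = (\<Sum>i<N. \<Sum>k<N. A $$ (i,k) * B $$ (k,i))"
    by (rule sum.cong[OF refl], rule index_mult_square[OF assms]) auto
  finally show ?thesis .
qed

lemma mtrace_mult_commute:
  assumes "A \<in> carrier_mat N N" "B \<in> carrier_mat N N"
  shows "mtrace (A * B) = mtrace (B * A)"
  unfolding mtrace_mult[OF assms] mtrace_mult[OF assms(2,1)]
  by (subst sum.swap) (simp add: mult.commute)

lemma mtrace_mult_add:
  assumes "Q \<in> carrier_mat N N" "A \<in> carrier_mat N N" "B \<in> carrier_mat N N"
  shows "mtrace (Q * (A + B)) = mtrace (Q * A) + mtrace (Q * B)"
  using assms by (simp add: mtrace_mult distrib_left sum.distrib)

lemma mtrace_mult_minus:
  assumes "Q \<in> carrier_mat N N" "A \<in> carrier_mat N N" "B \<in> carrier_mat N N"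
  shows "mtrace (Q * (A - B)) = mtrace (Q * A) - mtrace (Q * B)"
  using assms by (simp add: mtrace_mult[where N=N] minus_carrier_mat right_diff_distrib sum_subtractf)

lemma mtrace_smult: "A \<in> carrier_mat N N \<Longrightarrow> mtrace (c \<cdot>\<^sub>m A) = c * mtrace (A :: complex mat)"
  unfolding mtrace_def by (auto simp: sum_distrib_left intro!: sum.cong)

lemma mtrace_mult_smult:
  assumes "Q \<in> carrier_mat N N" "A \<in> carrier_mat N N"
  shows "mtrace (Q * (c \<cdot>\<^sub>m A)) = c * mtrace (Q * A)"
  using assms by (simp add: mult_smult_square[where N=N] mtrace_smult[where N=N] mult_carrier_square[where N=N])

lemma mtrace_mult_sum_mat:
  assumes "Q \<in> carrier_mat N N" "\<And>s. s \<in> A \<Longrightarrow> F s \<in> carrier_mat N N"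
  shows "mtrace (Q * mat N N (\<lambda>(i,j). \<Sum>s\<in>A. F s $$ (i,j))) = (\<Sum>s\<in>A. mtrace (Q * F s))"
proof -
  have "mtrace (Q * mat N N (\<lambda>(i,j). \<Sum>s\<in>A. F s $$ (i,j)))
      = (\<Sum>i<N. \<Sum>k<N. Q $$ (i,k) * (\<Sum>s\<in>A. F s $$ (k,i)))"
    using assms by (simp add: mtrace_mult)
  also have "\<dots> = (\<Sum>i<N. \<Sum>s\<in>A. \<Sum>k<N. Q $$ (i,k) * F s $$ (k,i))"
    unfolding sum_distrib_left by (rule sum.cong[OF refl], rule sum.swap)
  also have "\<dots> = (\<Sum>s\<in>A. \<Sum>i<N. \<Sum>k<N. Q $$ (i,k) * F s $$ (k,i))"
    by (rule sum.swap)
  also have "\<dots> = (\<Sum>s\<in>A. mtrace (Q * F s))"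
    using assms by (simp add: mtrace_mult)
  finally show ?thesis .
qed

lemma half_projector_idem:
  fixes S :: "complex mat"
  assumes S: "S \<in> carrier_mat N N" and SS: "S * S = 1\<^sub>m N" and s: "s * s = 1"
  shows "((1/2) \<cdot>\<^sub>m (1\<^sub>m N + s \<cdot>\<^sub>m S)) * ((1/2) \<cdot>\<^sub>m (1\<^sub>m N + s \<cdot>\<^sub>m S)) = (1/2) \<cdot>\<^sub>m (1\<^sub>m N + s \<cdot>\<^sub>m S)"
proof -
  let ?Q = "1\<^sub>m N + s \<cdot>\<^sub>m S"
  have Q: "?Q \<in> carrier_mat N N" using S by simp
  have "S * ?Q = S * 1\<^sub>m N + S * (s \<cdot>\<^sub>m S)"
    by (rule mult_add_distrib_mat[OF S]) (use S in auto)
  also have "\<dots> = S + s \<cdot>\<^sub>m 1\<^sub>m N" using S SS by (simp add: mult_smult_square[where N=N])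
  finally have SQ: "S * ?Q = S + s \<cdot>\<^sub>m 1\<^sub>m N" .
  have "?Q * ?Q = 1\<^sub>m N * ?Q + (s \<cdot>\<^sub>m S) * ?Q"
    by (rule add_mult_distrib_mat) (use S in auto)
  also have "\<dots> = ?Q + s \<cdot>\<^sub>m (S + s \<cdot>\<^sub>m 1\<^sub>m N)"
    using S Q SQ by (simp add: smult_mult_square[where N=N])
  finally have QQ: "?Q * ?Q = ?Q + s \<cdot>\<^sub>m (S + s \<cdot>\<^sub>m 1\<^sub>m N)" .
  have "((1/2) \<cdot>\<^sub>m ?Q) * ((1/2) \<cdot>\<^sub>m ?Q) = (1/4) \<cdot>\<^sub>m (?Q * ?Q)"
    using Q by (simp add: smult_mult_square[where N=N] mult_smult_square[where N=N] smult_smult_mat mult_carrier_square[where N=N])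
  also have "\<dots> = (1/2) \<cdot>\<^sub>m ?Q"
  proof (rule eq_matI)
    fix i j assume "i < dim_row ((1/2) \<cdot>\<^sub>m ?Q)" "j < dim_col ((1/2) \<cdot>\<^sub>m ?Q)"
    then have i: "i < N" and j: "j < N" using S by auto
    show "((1/4) \<cdot>\<^sub>m (?Q * ?Q)) $$ (i,j) = ((1/2) \<cdot>\<^sub>m ?Q) $$ (i,j)"
      unfolding QQ using i j S s by (auto simp: field_simps)
  qed (use S in auto)
  finally show ?thesis .
qed

lemma half_projector_commute:
  fixes S Q :: "complex mat"
  assumes S: "S \<in> carrier_mat N N" and Q: "Q \<in> carrier_mat N N" and QS: "Q * S = S * Q"
  shows "Q * ((1/2) \<cdot>\<^sub>m (1\<^sub>m N + s \<cdot>\<^sub>m S)) = ((1/2) \<cdot>\<^sub>m (1\<^sub>m N + s \<cdot>\<^sub>m S)) * Q"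
proof -
  have "Q * (1\<^sub>m N + s \<cdot>\<^sub>m S) = Q * 1\<^sub>m N + Q * (s \<cdot>\<^sub>m S)"
    by (rule mult_add_distrib_mat[OF Q]) (use S in auto)
  also have "\<dots> = Q + s \<cdot>\<^sub>m (S * Q)" using Q S QS by (simp add: mult_smult_square[where N=N])
  also have "\<dots> = 1\<^sub>m N * Q + (s \<cdot>\<^sub>m S) * Q" using Q S by (simp add: smult_mult_square[where N=N])
  also have "\<dots> = (1\<^sub>m N + s \<cdot>\<^sub>m S) * Q"
    by (rule add_mult_distrib_mat[symmetric]) (use S Q in auto)
  finally have "Q * (1\<^sub>m N + s \<cdot>\<^sub>m S) = (1\<^sub>m N + s \<cdot>\<^sub>m S) * Q" .
  then show ?thesis using Q S by (simp add: smult_mult_square[where N=N] mult_smult_square[where N=N])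
qed

lemma mtrace_conj_projector:
  assumes Q: "Q \<in> carrier_mat N N" and P: "P \<in> carrier_mat N N" and X: "X \<in> carrier_mat N N"
    and QP: "Q * P = P * Q" and PP: "P * P = P"
  shows "mtrace (Q * (P * X * P)) = mtrace (Q * (P * X))"
proof -
  have "mtrace (Q * (P * X * P)) = mtrace ((Q * (P * X)) * P)"
    using Q P X by (simp add: assoc_mult_square[where N=N] mult_carrier_square[where N=N])
  also have "\<dots> = mtrace (P * (Q * (P * X)))"
    by (rule mtrace_mult_commute) (use Q P X in \<open>auto simp: mult_carrier_square[where N=N]\<close>)
  also have "\<dots> = mtrace ((P * Q) * P * X)"
    using Q P X by (simp add: assoc_mult_square[where N=N] mult_carrier_square[where N=N])
  also have "\<dots> = mtrace (Q * (P * P) * X)"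
    using Q P X by (simp add: QP[symmetric] assoc_mult_square[where N=N] mult_carrier_square[where N=N])
  finally show ?thesis using PP Q P X by (simp add: assoc_mult_square[where N=N] mult_carrier_square[where N=N])
qed

lemma mtrace_conj_involution:
  assumes Q: "Q \<in> carrier_mat N N" and C: "C \<in> carrier_mat N N" and X: "X \<in> carrier_mat N N"
    and QC: "Q * C = C * Q" and CC: "C * C = 1\<^sub>m N"
  shows "mtrace (Q * (C * X * C)) = mtrace (Q * X)"
proof -
  have "mtrace (Q * (C * X * C)) = mtrace ((Q * (C * X)) * C)"
    using Q C X by (simp add: assoc_mult_square[where N=N] mult_carrier_square[where N=N])
  also have "\<dots> = mtrace (C * (Q * (C * X)))"
    by (rule mtrace_mult_commute) (use Q C X in \<open>auto simp: mult_carrier_square[where N=N]\<close>)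
  also have "\<dots> = mtrace ((C * Q) * C * X)"
    using Q C X by (simp add: assoc_mult_square[where N=N] mult_carrier_square[where N=N])
  also have "\<dots> = mtrace (Q * (C * C) * X)"
    using Q C X by (simp add: QC[symmetric] assoc_mult_square[where N=N] mult_carrier_square[where N=N])
  finally show ?thesis using CC Q C X by simp
qed

text \<open>Cyclicity of the trace moves the commuting projectors onto each other (\<open>P\<^sup>2 = P\<close>) and
  cancels the correction (\<open>C\<^sup>2 = 1\<close>); the two projectors then sum to the identity.\<close>

lemma mtrace_pinching_channel:
  fixes Q S C \<rho> :: "complex mat"
  assumes Q: "Q \<in> carrier_mat N N" and S: "S \<in> carrier_mat N N" and C: "C \<in> carrier_mat N N"
    and R: "\<rho> \<in> carrier_mat N N"
    and QS: "Q * S = S * Q" and QC: "Q * C = C * Q" and SS: "S * S = 1\<^sub>m N" and CC: "C * C = 1\<^sub>m N"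
    and CA: "mat_adjoint C = C"
  shows "mtrace (Q * ((1/2) \<cdot>\<^sub>m (1\<^sub>m N + S) * \<rho> * ((1/2) \<cdot>\<^sub>m (1\<^sub>m N + S))
      + C * ((1/2) \<cdot>\<^sub>m (1\<^sub>m N - S)) * \<rho> * ((1/2) \<cdot>\<^sub>m (1\<^sub>m N - S)) * mat_adjoint C)) = mtrace (Q * \<rho>)"
proof -
  have e1: "1\<^sub>m N + S = 1\<^sub>m N + (1::complex) \<cdot>\<^sub>m S" by (rule eq_matI) (use S in auto)
  have e2: "1\<^sub>m N - S = 1\<^sub>m N + (-1::complex) \<cdot>\<^sub>m S"
    by (rule eq_matI) (use S in auto)
  define Pp where "Pp = (1/2) \<cdot>\<^sub>m (1\<^sub>m N + (1::complex) \<cdot>\<^sub>m S)"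
  define Pm where "Pm = (1/2) \<cdot>\<^sub>m (1\<^sub>m N + (-1::complex) \<cdot>\<^sub>m S)"
  have Pp: "Pp \<in> carrier_mat N N" and Pm: "Pm \<in> carrier_mat N N" unfolding Pp_def Pm_def using S by auto
  have PPp: "Pp * Pp = Pp" unfolding Pp_def by (rule half_projector_idem[OF S SS]) simp
  have PPm: "Pm * Pm = Pm" unfolding Pm_def by (rule half_projector_idem[OF S SS]) simp
  have QPp: "Q * Pp = Pp * Q" unfolding Pp_def by (rule half_projector_commute[OF S Q QS])
  have QPm: "Q * Pm = Pm * Q" unfolding Pm_def by (rule half_projector_commute[OF S Q QS])
  have sum1: "Pp + Pm = 1\<^sub>m N"
    unfolding Pp_def Pm_def by (rule eq_matI) (use S in \<open>auto simp: field_simps\<close>)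
  have "mtrace (Q * (Pp * \<rho> * Pp + C * Pm * \<rho> * Pm * C))
      = mtrace (Q * (Pp * \<rho> * Pp)) + mtrace (Q * (C * (Pm * \<rho> * Pm) * C))"
    using Q Pp Pm C R by (simp add: mtrace_mult_add[where N=N] mult_carrier_square[where N=N] assoc_mult_square[where N=N])
  also have "\<dots> = mtrace (Q * (Pp * \<rho>)) + mtrace (Q * (Pm * \<rho>))"
    using mtrace_conj_projector[OF Q Pp R QPp PPp] mtrace_conj_projector[OF Q Pm R QPm PPm]
      mtrace_conj_involution[OF Q C _ QC CC, of "Pm * \<rho> * Pm"] Pm R by (simp add: mult_carrier_square[where N=N])
  also have "\<dots> = mtrace (Q * (Pp * \<rho> + Pm * \<rho>))"
    using Q Pp Pm R by (simp add: mtrace_mult_add[where N=N] mult_carrier_square[where N=N])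
  also have "Pp * \<rho> + Pm * \<rho> = \<rho>"
    using add_mult_distrib_mat[OF Pp Pm R, symmetric] sum1 R by simp
  finally show ?thesis unfolding e1 e2 CA Pp_def[symmetric] Pm_def[symmetric] .
qed

lemma pauli_string_index:
  assumes "i < 2^n" "k < 2^n"
  shows "pauli_string n S T $$ (i,k) = (if differ_on n S i k then z_sign T k else 0)"
proof -
  have "pauli_string n S T $$ (i,k) = (\<Sum>l<2^n. pauli_X n S $$ (i,l) * pauli_Z n T $$ (l,k))"
    unfolding pauli_string_def by (rule index_mult_square) (use assms in auto)
  also have "\<dots> = pauli_X n S $$ (i, k) * pauli_Z n T $$ (k, k)"
    by (rule sum_lessThan_single[OF assms(2)]) (auto simp: pauli_Z_index assms)
  also have "\<dots> = (if differ_on n S i k then z_sign T k else 0)" by (simp add: pauli_Z_index pauli_X_index assms)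
  finally show ?thesis .
qed

lemma mtrace_pauli_string_mult:
  assumes M: "M \<in> carrier_mat (2^n) (2^n)"
  shows "mtrace (pauli_string n S T * M) = (\<Sum>i<2^n. z_sign T (flip_bits n S i) * M $$ (flip_bits n S i, i))"
proof -
  have "mtrace (pauli_string n S T * M) = (\<Sum>i<2^n. \<Sum>k<2^n. pauli_string n S T $$ (i,k) * M $$ (k,i))"
    by (rule mtrace_mult[OF pauli_string_carrier M])
  also have "\<dots> = (\<Sum>i<2^n. z_sign T (flip_bits n S i) * M $$ (flip_bits n S i, i))"
  proof (rule sum.cong[OF refl])
    fix i assume i: "i \<in> {..<(2::nat)^n}"
    show "(\<Sum>k<2^n. pauli_string n S T $$ (i,k) * M $$ (k,i)) = z_sign T (flip_bits n S i) * M $$ (flip_bits n S i, i)"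
      by (subst sum_lessThan_single[OF flip_bits_less[of n S i]]) (use i in \<open>auto simp: pauli_string_index differ_on_iff flip_bits_less differ_on_flip_bits\<close>)
  qed
  finally show ?thesis .
qed

section \<open>Traces along the exponential series\<close>

text \<open>The entrywise 1-norm is submultiplicative, so it bounds the powers of a bounded
  superoperator and makes the exponential series converge absolutely entry by entry.\<close>

definition entry_norm :: "nat \<Rightarrow> complex mat \<Rightarrow> real" where
  "entry_norm N A = (\<Sum>i<N. \<Sum>j<N. norm (A $$ (i,j)))"

lemma entry_norm_nonneg: "entry_norm N A \<ge> 0"
  unfolding entry_norm_def by (intro sum_nonneg) auto

lemma norm_entry_le_entry_norm: assumes "i < N" "j < N" shows "norm (A $$ (i,j)) \<le> entry_norm N A"
proof -
  have "norm (A $$ (i,j)) \<le> (\<Sum>j'<N. norm (A $$ (i,j')))"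
    by (rule member_le_sum[where f="\<lambda>j'. norm (A $$ (i,j'))"]) (use assms in auto)
  also have "\<dots> \<le> entry_norm N A" unfolding entry_norm_def
    by (rule member_le_sum[where f="\<lambda>i'. \<Sum>j'<N. norm (A $$ (i',j'))"]) (use assms in \<open>auto intro: sum_nonneg\<close>)
  finally show ?thesis .
qed

lemma entry_norm_mult:
  assumes A: "A \<in> carrier_mat N N" and B: "B \<in> carrier_mat N N"
  shows "entry_norm N (A * B) \<le> entry_norm N A * entry_norm N B"
proof -
  have "entry_norm N (A * B) = (\<Sum>i<N. \<Sum>j<N. norm (\<Sum>k<N. A $$ (i,k) * B $$ (k,j)))"
    unfolding entry_norm_def by (intro sum.cong refl) (simp add: index_mult_square[OF A B])
  also have "\<dots> \<le> (\<Sum>i<N. \<Sum>j<N. \<Sum>k<N. norm (A $$ (i,k)) * norm (B $$ (k,j)))"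
    by (intro sum_mono order.trans[OF norm_sum]) (simp add: norm_mult)
  also have "\<dots> = (\<Sum>i<N. \<Sum>k<N. norm (A $$ (i,k)) * (\<Sum>j<N. norm (B $$ (k,j))))"
    by (rule sum.cong[OF refl]) (subst sum.swap, simp add: sum_distrib_left)
  also have "\<dots> \<le> (\<Sum>i<N. \<Sum>k<N. norm (A $$ (i,k)) * entry_norm N B)"
  proof (intro sum_mono mult_left_mono)
    fix k assume "k \<in> {..<N}"
    then show "(\<Sum>j<N. norm (B $$ (k,j))) \<le> entry_norm N B" unfolding entry_norm_def
      by (intro member_le_sum[where f="\<lambda>i'. \<Sum>j'<N. norm (B $$ (i',j'))"]) (auto intro: sum_nonneg)
  qed simp
  also have "\<dots> = entry_norm N A * entry_norm N B" unfolding entry_norm_def by (simp add: sum_distrib_right)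
  finally show ?thesis .
qed

lemma entry_norm_mult_le:
  assumes "A \<in> carrier_mat N N" "B \<in> carrier_mat N N" "entry_norm N A \<le> a"
  shows "entry_norm N (A * B) \<le> a * entry_norm N B"
  using entry_norm_mult[OF assms(1,2)] mult_right_mono[OF assms(3) entry_norm_nonneg[of N B]] by linarith

lemma entry_norm_add: assumes "A \<in> carrier_mat N N" "B \<in> carrier_mat N N"
  shows "entry_norm N (A + B) \<le> entry_norm N A + entry_norm N B"
proof -
  have "entry_norm N (A + B) \<le> (\<Sum>i<N. \<Sum>j<N. norm (A $$ (i,j)) + norm (B $$ (i,j)))"
    unfolding entry_norm_def using assms by (intro sum_mono) (simp add: norm_triangle_ineq)
  also have "\<dots> = entry_norm N A + entry_norm N B" unfolding entry_norm_def by (simp add: sum.distrib)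
  finally show ?thesis .
qed

lemma entry_norm_minus: assumes "A \<in> carrier_mat N N" "B \<in> carrier_mat N N"
  shows "entry_norm N (A - B) \<le> entry_norm N A + entry_norm N B"
proof -
  have "entry_norm N (A - B) \<le> (\<Sum>i<N. \<Sum>j<N. norm (A $$ (i,j)) + norm (B $$ (i,j)))"
    unfolding entry_norm_def using assms by (intro sum_mono) (simp add: norm_triangle_ineq4)
  also have "\<dots> = entry_norm N A + entry_norm N B" unfolding entry_norm_def by (simp add: sum.distrib)
  finally show ?thesis .
qed

lemma entry_norm_sum_mat:
  assumes "finite A"
  shows "entry_norm N (mat N N (\<lambda>(i,j). \<Sum>s\<in>A. F s $$ (i,j))) \<le> (\<Sum>s\<in>A. entry_norm N (F s))"
proof -
  have "entry_norm N (mat N N (\<lambda>(i,j). \<Sum>s\<in>A. F s $$ (i,j))) = (\<Sum>i<N. \<Sum>j<N. norm (\<Sum>s\<in>A. F s $$ (i,j)))"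
    unfolding entry_norm_def by simp
  also have "\<dots> \<le> (\<Sum>i<N. \<Sum>j<N. \<Sum>s\<in>A. norm (F s $$ (i,j)))"
    by (intro sum_mono norm_sum)
  also have "\<dots> = (\<Sum>s\<in>A. entry_norm N (F s))"
    unfolding entry_norm_def by (subst sum.swap, rule sum.cong[OF refl], subst sum.swap, rule refl)
  finally show ?thesis .
qed

lemma funpow_carrier:
  fixes F :: "'a mat \<Rightarrow> 'a mat"
  assumes "\<rho> \<in> carrier_mat N N" "\<And>X. X \<in> carrier_mat N N \<Longrightarrow> F X \<in> carrier_mat N N"
  shows "(F ^^ k) \<rho> \<in> carrier_mat N N"
proof (induction k)
  case 0 show ?case using assms(1) by simp
next
  case (Suc k)
  have "(F ^^ Suc k) \<rho> = F ((F ^^ k) \<rho>)" by simp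
  then show ?case using assms(2)[OF Suc.IH] by simp
qed

lemma entry_norm_funpow:
  fixes F :: "complex mat \<Rightarrow> complex mat"
  assumes "\<rho> \<in> carrier_mat N N" "\<And>X. X \<in> carrier_mat N N \<Longrightarrow> F X \<in> carrier_mat N N"
    and "\<And>X. X \<in> carrier_mat N N \<Longrightarrow> entry_norm N (F X) \<le> K * entry_norm N X" and "K \<ge> 0"
  shows "entry_norm N ((F ^^ k) \<rho>) \<le> K ^ k * entry_norm N \<rho>"
proof (induction k)
  case 0 then show ?case by simp
next
  case (Suc k)
  have c: "(F ^^ k) \<rho> \<in> carrier_mat N N" by (rule funpow_carrier) (use assms in auto)
  have "entry_norm N ((F ^^ Suc k) \<rho>) \<le> K * entry_norm N ((F ^^ k) \<rho>)" using assms(3)[OF c] by simp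
  also have "\<dots> \<le> K * (K ^ k * entry_norm N \<rho>)" using Suc assms(4) by (rule mult_left_mono)
  finally show ?case by (simp add: mult.assoc)
qed

lemma summable_exp_series_entry:
  fixes F :: "complex mat \<Rightarrow> complex mat"
  assumes R: "\<rho> \<in> carrier_mat N N"
    and Fc: "\<And>X. X \<in> carrier_mat N N \<Longrightarrow> F X \<in> carrier_mat N N"
    and Fb: "\<And>X. X \<in> carrier_mat N N \<Longrightarrow> entry_norm N (F X) \<le> K * entry_norm N X" and K: "K \<ge> 0"
    and ij: "i < N" "j < N"
  shows "summable (\<lambda>k. complex_of_real (t ^ k / fact k) * ((F ^^ k) \<rho>) $$ (i,j))"
proof (rule summable_comparison_test'[where N=0])
  show "summable (\<lambda>k. entry_norm N \<rho> * (inverse (fact k) * (\<bar>t\<bar> * K) ^ k))"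
    by (intro summable_mult summable_exp)
  fix k :: nat
  have "norm (complex_of_real (t ^ k / fact k)) = \<bar>t\<bar> ^ k / fact k"
    unfolding norm_of_real by (simp add: power_abs)
  then have "norm (complex_of_real (t ^ k / fact k) * ((F ^^ k) \<rho>) $$ (i,j))
      = \<bar>t\<bar> ^ k / fact k * norm (((F ^^ k) \<rho>) $$ (i,j))"
    by (simp only: norm_mult)
  also have "\<dots> \<le> \<bar>t\<bar> ^ k / fact k * (K ^ k * entry_norm N \<rho>)"
    using norm_entry_le_entry_norm[OF ij, of "(F ^^ k) \<rho>"] entry_norm_funpow[OF R Fc Fb K, of k]
    by (intro mult_left_mono) auto
  also have "\<dots> = entry_norm N \<rho> * (inverse (fact k) * (\<bar>t\<bar> * K) ^ k)"
    by (simp add: field_simps power_mult_distrib)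
  finally show "norm (complex_of_real (t ^ k / fact k) * ((F ^^ k) \<rho>) $$ (i,j))
      \<le> entry_norm N \<rho> * (inverse (fact k) * (\<bar>t\<bar> * K) ^ k)" .
qed

lemma mtrace_mult_suminf_mat:
  assumes Q: "Q \<in> carrier_mat N N" and Xc: "\<And>k. X k \<in> carrier_mat N N"
    and summ: "\<And>i j. i < N \<Longrightarrow> j < N \<Longrightarrow> summable (\<lambda>k. X k $$ (i,j))"
  shows "mtrace (Q * mat N N (\<lambda>(i,j). \<Sum>k. X k $$ (i,j))) = (\<Sum>k. mtrace (Q * X k))"
proof -
  have M: "mat N N (\<lambda>(i,j). \<Sum>k. X k $$ (i,j)) \<in> carrier_mat N N" by simp
  have "mtrace (Q * mat N N (\<lambda>(i,j). \<Sum>k. X k $$ (i,j)))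
      = (\<Sum>i<N. \<Sum>l<N. Q $$ (i,l) * (\<Sum>k. X k $$ (l,i)))"
    using mtrace_mult[OF Q M] by simp
  also have "\<dots> = (\<Sum>i<N. \<Sum>l<N. \<Sum>k. Q $$ (i,l) * X k $$ (l,i))"
    by (intro sum.cong refl) (simp add: suminf_mult summ)
  also have "\<dots> = (\<Sum>i<N. \<Sum>k. \<Sum>l<N. Q $$ (i,l) * X k $$ (l,i))"
    by (intro sum.cong refl suminf_sum[symmetric] summable_mult summ) auto
  also have "\<dots> = (\<Sum>k. \<Sum>i<N. \<Sum>l<N. Q $$ (i,l) * X k $$ (l,i))"
    by (intro suminf_sum[symmetric] summable_sum summable_mult summ) auto
  also have "\<dots> = (\<Sum>k. mtrace (Q * X k))"
    by (simp add: mtrace_mult[OF Q Xc])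
  finally show ?thesis .
qed

text \<open>The entrywise bound only serves to justify exchanging trace and series.\<close>

lemma mtrace_exp_series_conserved:
  fixes F :: "complex mat \<Rightarrow> complex mat"
  assumes Q: "Q \<in> carrier_mat N N" and R: "\<rho> \<in> carrier_mat N N"
    and Fc: "\<And>X. X \<in> carrier_mat N N \<Longrightarrow> F X \<in> carrier_mat N N"
    and Fb: "\<And>X. X \<in> carrier_mat N N \<Longrightarrow> entry_norm N (F X) \<le> K * entry_norm N X" and K: "K \<ge> 0"
    and Ft: "\<And>X. X \<in> carrier_mat N N \<Longrightarrow> mtrace (Q * F X) = 0"
  shows "mtrace (Q * mat N N (\<lambda>(i,j). \<Sum>k. complex_of_real (t ^ k / fact k) * ((F ^^ k) \<rho>) $$ (i,j)))
         = mtrace (Q * \<rho>)"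
proof -
  define X where "X k = complex_of_real (t ^ k / fact k) \<cdot>\<^sub>m (F ^^ k) \<rho>" for k
  have Fk: "(F ^^ k) \<rho> \<in> carrier_mat N N" for k by (rule funpow_carrier[OF R Fc])
  then have Xc: "X k \<in> carrier_mat N N" for k unfolding X_def by simp
  have entry: "X k $$ (i,j) = complex_of_real (t ^ k / fact k) * ((F ^^ k) \<rho>) $$ (i,j)"
    if "i < N" "j < N" for i j k
    unfolding X_def using that Fk[of k] by simp
  have "mat N N (\<lambda>(i,j). \<Sum>k. complex_of_real (t ^ k / fact k) * ((F ^^ k) \<rho>) $$ (i,j))
      = mat N N (\<lambda>(i,j). \<Sum>k. X k $$ (i,j))"
    by (rule eq_matI) (simp_all add: entry)
  then have "mtrace (Q * mat N N (\<lambda>(i,j). \<Sum>k. complex_of_real (t ^ k / fact k) * ((F ^^ k) \<rho>) $$ (i,j)))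
      = (\<Sum>k. mtrace (Q * X k))"
    using mtrace_mult_suminf_mat[OF Q Xc] summable_exp_series_entry[OF R Fc Fb K] by (simp add: entry)
  also have "(\<lambda>k. mtrace (Q * X k)) = (\<lambda>k. if k = 0 then mtrace (Q * \<rho>) else 0)"
  proof
    fix k show "mtrace (Q * X k) = (if k = 0 then mtrace (Q * \<rho>) else 0)"
      using Ft[OF Fk] by (cases k) (simp_all add: X_def mtrace_mult_smult[OF Q] Fc Fk R)
  qed
  also have "(\<Sum>k. if k = 0 then mtrace (Q * \<rho>) else 0) = mtrace (Q * \<rho>)"
    using sums_single[of 0 "\<lambda>_. mtrace (Q * \<rho>)"] by (simp add: sums_iff)
  finally show ?thesis .
qed

lemma entry_norm_channel_minus:
  assumes Pp: "Pp \<in> carrier_mat N N" and Pm: "Pm \<in> carrier_mat N N" and C: "C \<in> carrier_mat N N"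
    and D: "D \<in> carrier_mat N N" and X: "X \<in> carrier_mat N N"
  shows "entry_norm N (Pp * X * Pp + C * Pm * X * Pm * D - X)
     \<le> (entry_norm N Pp * entry_norm N Pp + entry_norm N C * entry_norm N Pm * entry_norm N Pm * entry_norm N D + 1) * entry_norm N X"
proof -
  have c1: "Pp * X * Pp \<in> carrier_mat N N" using Pp X by (simp add: mult_carrier_square[where N=N])
  have c2: "C * Pm * X * Pm * D \<in> carrier_mat N N" using Pm C D X by (simp add: mult_carrier_square[where N=N])
  have h1: "entry_norm N (Pp * X) \<le> entry_norm N Pp * entry_norm N X" by (rule entry_norm_mult[OF Pp X])
  have h1': "entry_norm N (Pp * X * Pp) \<le> (entry_norm N Pp * entry_norm N X) * entry_norm N Pp"
    by (rule entry_norm_mult_le[OF _ Pp h1]) (use Pp X in \<open>simp add: mult_carrier_square[where N=N]\<close>)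
  have h2: "entry_norm N (C * Pm) \<le> entry_norm N C * entry_norm N Pm" by (rule entry_norm_mult[OF C Pm])
  have h3: "entry_norm N (C * Pm * X) \<le> (entry_norm N C * entry_norm N Pm) * entry_norm N X"
    by (rule entry_norm_mult_le[OF _ X h2]) (use C Pm in \<open>simp add: mult_carrier_square[where N=N]\<close>)
  have h4: "entry_norm N (C * Pm * X * Pm) \<le> ((entry_norm N C * entry_norm N Pm) * entry_norm N X) * entry_norm N Pm"
    by (rule entry_norm_mult_le[OF _ Pm h3]) (use C Pm X in \<open>simp add: mult_carrier_square[where N=N]\<close>)
  have h5: "entry_norm N (C * Pm * X * Pm * D) \<le> (((entry_norm N C * entry_norm N Pm) * entry_norm N X) * entry_norm N Pm) * entry_norm N D"
    by (rule entry_norm_mult_le[OF _ D h4]) (use C Pm X in \<open>simp add: mult_carrier_square[where N=N]\<close>)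
  have "entry_norm N (Pp * X * Pp + C * Pm * X * Pm * D - X) \<le> entry_norm N (Pp * X * Pp + C * Pm * X * Pm * D) + entry_norm N X"
    by (rule entry_norm_minus) (use c1 c2 X in auto)
  also have "\<dots> \<le> entry_norm N (Pp * X * Pp) + entry_norm N (C * Pm * X * Pm * D) + entry_norm N X"
    using entry_norm_add[OF c1 c2] by linarith
  also have "\<dots> \<le> (entry_norm N Pp * entry_norm N Pp + entry_norm N C * entry_norm N Pm * entry_norm N Pm * entry_norm N D + 1) * entry_norm N X"
    using h1' h5 by (simp add: algebra_simps)
  finally show ?thesis .
qed

section \<open>Lattice coordinates\<close>

lemma sites_finite: "finite (sites L)"
proof -
  let ?R = "{0..<int L} \<times> {0..<int L}"
  have "sites L \<subseteq> (\<lambda>(x,y). Plaq x y) ` ?R \<union> (\<lambda>(x,y). Vert x y) ` ?R"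
    unfolding sites_def by force
  then show ?thesis by (rule finite_subset) auto
qed

lemma cmod_less: "L \<ge> 1 \<Longrightarrow> cmod L x < L"
  unfolding cmod_def by (simp add: nat_less_iff)

lemma cmod_eq: "L \<ge> 1 \<Longrightarrow> cmod L a = cmod L b \<longleftrightarrow> int L dvd (a - b)"
proof -
  assume L: "L \<ge> 1"
  have "cmod L a = cmod L b \<longleftrightarrow> a mod int L = b mod int L"
    unfolding cmod_def using L by (simp add: eq_nat_nat_iff)
  also have "\<dots> \<longleftrightarrow> int L dvd (a - b)" by (rule mod_eq_dvd_iff)
  finally show ?thesis .
qed

lemma cmod_zero: "L \<ge> 1 \<Longrightarrow> cmod L a = 0 \<longleftrightarrow> int L dvd a"
  using cmod_eq[of L a 0] by (simp add: cmod_def)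

lemma cmod_mod: "cmod L (a mod int L) = cmod L a"
  unfolding cmod_def by simp

lemma mult_add_eq_iff:
  assumes "(b::nat) < L" "d < L" shows "a * L + b = c * L + d \<longleftrightarrow> a = c \<and> b = d"
proof
  assume e: "a * L + b = c * L + d"
  have "(a * L + b) div L = a" "(c * L + d) div L = c" using assms by auto
  moreover have "(a * L + b) mod L = b" "(c * L + d) mod L = d" using assms by auto
  ultimately show "a = c \<and> b = d" using e by metis
qed auto

lemma hq_eq_iff: "L \<ge> 1 \<Longrightarrow> hq L x y = hq L x' y' \<longleftrightarrow> cmod L x = cmod L x' \<and> cmod L y = cmod L y'"
  unfolding hq_def using mult_add_eq_iff[of "cmod L x" L "cmod L x'" "cmod L y" "cmod L y'"] cmod_less by auto

lemma uq_eq_iff: "L \<ge> 1 \<Longrightarrow> uq L x y = uq L x' y' \<longleftrightarrow> cmod L x = cmod L x' \<and> cmod L y = cmod L y'"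
  unfolding uq_def using mult_add_eq_iff[of "cmod L x" L "cmod L x'" "cmod L y" "cmod L y'"] cmod_less by auto

lemma hq_less_square: "L \<ge> 1 \<Longrightarrow> hq L x y < L * L"
proof -
  assume L: "L \<ge> 1"
  have "cmod L y * L + cmod L x < cmod L y * L + L" using cmod_less[OF L] by simp
  also have "\<dots> = (cmod L y + 1) * L" by simp
  also have "\<dots> \<le> L * L" using cmod_less[OF L, of y] by (intro mult_right_mono) auto
  finally show ?thesis unfolding hq_def .
qed

lemma uq_less: "L \<ge> 1 \<Longrightarrow> uq L x y < nq L"
  using hq_less_square[of L x y] unfolding uq_def hq_def nq_def by simp

lemma hq_less: "L \<ge> 1 \<Longrightarrow> hq L x y < nq L"
  using hq_less_square[of L x y] unfolding nq_def by simp

lemma hq_neq_uq: "L \<ge> 1 \<Longrightarrow> hq L x y \<noteq> uq L x' y'"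
  using hq_less_square[of L x y] unfolding uq_def by simp

lemma cmod_0 [simp]: "cmod L 0 = 0"
  unfolding cmod_def by simp

lemma insert_image_residues:
  assumes L: "L \<ge> 1" and f: "\<And>y y'. cmod L y = cmod L y' \<Longrightarrow> f y = f y'"
  shows "insert (f c) {f y | y. 0 \<le> y \<and> y < int L \<and> cmod L y \<noteq> cmod L c} = range f"
proof
  show "range f \<subseteq> insert (f c) {f y | y. 0 \<le> y \<and> y < int L \<and> cmod L y \<noteq> cmod L c}"
  proof
    fix q assume "q \<in> range f"
    then obtain y where "q = f (y mod int L)" using f[of _ "_ mod int L"] cmod_mod by (metis rangeE)
    moreover have "0 \<le> y mod int L" "y mod int L < int L" using L by simp_all
    ultimately show "q \<in> insert (f c) {f y | y. 0 \<le> y \<and> y < int L \<and> cmod L y \<noteq> cmod L c}"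
      using f[of "y mod int L" c] by (cases "cmod L (y mod int L) = cmod L c") auto
  qed
qed auto

section \<open>Logical operators, stabilizers and corrections as Pauli strings\<close>

definition suppX1 :: "nat \<Rightarrow> nat set" where
  "suppX1 L = insert (qA1 L) (qB L)"
definition suppZ1 :: "nat \<Rightarrow> nat set" where
  "suppZ1 L = insert (qA1 L) (qC L)"
definition suppX2 :: "nat \<Rightarrow> nat set" where
  "suppX2 L = insert (qA2 L) (qB' L)"
definition suppZ2 :: "nat \<Rightarrow> nat set" where
  "suppZ2 L = insert (qA2 L) (qC' L)"

lemma suppX1_iff: "L \<ge> 1 \<Longrightarrow> q \<in> suppX1 L \<longleftrightarrow> (\<exists>y. q = hq L 0 y)"
  using insert_image_residues[of L "hq L 0" 1] unfolding suppX1_def qA1_def qB_def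
  by (auto simp: hq_def)

lemma suppZ1_iff: "L \<ge> 1 \<Longrightarrow> q \<in> suppZ1 L \<longleftrightarrow> (\<exists>x. q = hq L x 1)"
  using insert_image_residues[of L "\<lambda>x. hq L x 1" 0] unfolding suppZ1_def qA1_def qC_def
  by (auto simp: hq_def)

lemma suppX2_iff: "L \<ge> 1 \<Longrightarrow> q \<in> suppX2 L \<longleftrightarrow> (\<exists>x. q = uq L x 0)"
  using insert_image_residues[of L "\<lambda>x. uq L x 0" 1] unfolding suppX2_def qA2_def qB'_def
  by (auto simp: uq_def)

lemma suppZ2_iff: "L \<ge> 1 \<Longrightarrow> q \<in> suppZ2 L \<longleftrightarrow> (\<exists>y. q = uq L 1 y)"
  using insert_image_residues[of L "uq L 1" 0] unfolding suppZ2_def qA2_def qC'_def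
  by (auto simp: uq_def)

lemma hq_in_suppX1: "L \<ge> 1 \<Longrightarrow> hq L a b \<in> suppX1 L \<longleftrightarrow> int L dvd a"
  using suppX1_iff[of L] hq_eq_iff[of L] cmod_zero[of L] by (auto simp: cmod_def)
lemma uq_notin_suppX1: "L \<ge> 1 \<Longrightarrow> uq L a b \<notin> suppX1 L"
  using suppX1_iff[of L] hq_neq_uq[of L] by metis
lemma hq_in_suppZ1: assumes L: "L \<ge> 1" shows "hq L a b \<in> suppZ1 L \<longleftrightarrow> int L dvd (b - 1)"
proof -
  have "hq L a b \<in> suppZ1 L \<longleftrightarrow> (\<exists>x. hq L a b = hq L x 1)" by (rule suppZ1_iff[OF L])
  also have "\<dots> \<longleftrightarrow> cmod L b = cmod L 1" using hq_eq_iff[OF L] by auto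
  finally show ?thesis using cmod_eq[OF L] by simp
qed
lemma uq_notin_suppZ1: "L \<ge> 1 \<Longrightarrow> uq L a b \<notin> suppZ1 L"
  using suppZ1_iff[of L] hq_neq_uq[of L] by metis
lemma uq_in_suppX2: "L \<ge> 1 \<Longrightarrow> uq L a b \<in> suppX2 L \<longleftrightarrow> int L dvd b"
  using suppX2_iff[of L] uq_eq_iff[of L] cmod_zero[of L] by (auto simp: cmod_def)
lemma hq_notin_suppX2: "L \<ge> 1 \<Longrightarrow> hq L a b \<notin> suppX2 L"
  using suppX2_iff[of L] hq_neq_uq[of L] by metis
lemma uq_in_suppZ2: assumes L: "L \<ge> 1" shows "uq L a b \<in> suppZ2 L \<longleftrightarrow> int L dvd (a - 1)"
proof -
  have "uq L a b \<in> suppZ2 L \<longleftrightarrow> (\<exists>y. uq L a b = uq L 1 y)" by (rule suppZ2_iff[OF L])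
  also have "\<dots> \<longleftrightarrow> cmod L a = cmod L 1" using uq_eq_iff[OF L] by auto
  finally show ?thesis using cmod_eq[OF L] by simp
qed
lemma hq_notin_suppZ2: "L \<ge> 1 \<Longrightarrow> hq L a b \<notin> suppZ2 L"
  using suppZ2_iff[of L] hq_neq_uq[of L] by metis

lemma supp_less:
  assumes L: "L \<ge> 1"
  shows "suppX1 L \<subseteq> {..<nq L}" "suppZ1 L \<subseteq> {..<nq L}" "suppX2 L \<subseteq> {..<nq L}" "suppZ2 L \<subseteq> {..<nq L}"
proof -
  show "suppX1 L \<subseteq> {..<nq L}" using suppX1_iff[OF L] hq_less[OF L] by auto
  show "suppZ1 L \<subseteq> {..<nq L}" using suppZ1_iff[OF L] hq_less[OF L] by auto
  show "suppX2 L \<subseteq> {..<nq L}" using suppX2_iff[OF L] uq_less[OF L] by auto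
  show "suppZ2 L \<subseteq> {..<nq L}" using suppZ2_iff[OF L] uq_less[OF L] by auto
qed

lemma supp_finite:
  assumes L: "L \<ge> 1"
  shows "finite (suppX1 L)" "finite (suppZ1 L)" "finite (suppX2 L)" "finite (suppZ2 L)"
  using supp_less[OF L] finite_subset by blast+

lemma qA1_notin_qB: "L \<ge> 1 \<Longrightarrow> qA1 L \<notin> qB L"
  unfolding qA1_def qB_def using hq_eq_iff by auto
lemma qA1_notin_qC: "L \<ge> 1 \<Longrightarrow> qA1 L \<notin> qC L"
  unfolding qA1_def qC_def using hq_eq_iff by (auto simp: cmod_def)
lemma qA2_notin_qB': "L \<ge> 1 \<Longrightarrow> qA2 L \<notin> qB' L"
  unfolding qA2_def qB'_def using uq_eq_iff by auto
lemma qA2_notin_qC': "L \<ge> 1 \<Longrightarrow> qA2 L \<notin> qC' L"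
  unfolding qA2_def qC'_def using uq_eq_iff by (auto simp: cmod_def)

lemma prod_on_sigX_set:
  assumes "q \<notin> Q" "finite Q" "insert q Q \<subseteq> {..<n}"
  shows "prod_on n sigX (q # sorted_list_of_set Q) = pauli_X n (insert q Q)"
proof -
  have "prod_on n sigX (q # sorted_list_of_set Q) = pauli_X n (odd_occ (q # sorted_list_of_set Q))"
    by (rule prod_on_sigX) (use assms in auto)
  also have "odd_occ (q # sorted_list_of_set Q) = insert q Q"
    by (subst odd_occ_distinct) (use assms in auto)
  finally show ?thesis .
qed

lemma prod_on_sigZ_set:
  assumes "q \<notin> Q" "finite Q" "insert q Q \<subseteq> {..<n}"
  shows "prod_on n sigZ (q # sorted_list_of_set Q) = pauli_Z n (insert q Q)"
proof -
  have "prod_on n sigZ (q # sorted_list_of_set Q) = pauli_Z n (odd_occ (q # sorted_list_of_set Q))"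
    by (rule prod_on_sigZ) (use assms in auto)
  also have "odd_occ (q # sorted_list_of_set Q) = insert q Q"
    by (subst odd_occ_distinct) (use assms in auto)
  finally show ?thesis .
qed

lemma logX1_eq: "L \<ge> 1 \<Longrightarrow> logX1 L = pauli_X (nq L) (suppX1 L)"
  unfolding logX1_def suppX1_def
  using prod_on_sigX_set[OF qA1_notin_qB] supp_finite supp_less unfolding suppX1_def by auto
lemma logZ1_eq: "L \<ge> 1 \<Longrightarrow> logZ1 L = pauli_Z (nq L) (suppZ1 L)"
  unfolding logZ1_def suppZ1_def
  using prod_on_sigZ_set[OF qA1_notin_qC] supp_finite supp_less unfolding suppZ1_def by auto
lemma logX2_eq: "L \<ge> 1 \<Longrightarrow> logX2 L = pauli_X (nq L) (suppX2 L)"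
  unfolding logX2_def suppX2_def
  using prod_on_sigX_set[OF qA2_notin_qB'] supp_finite supp_less unfolding suppX2_def by auto
lemma logZ2_eq: "L \<ge> 1 \<Longrightarrow> logZ2 L = pauli_Z (nq L) (suppZ2 L)"
  unfolding logZ2_def suppZ2_def
  using prod_on_sigZ_set[OF qA2_notin_qC'] supp_finite supp_less unfolding suppZ2_def by auto

definition has_X :: "pauli \<Rightarrow> bool" where "has_X P \<longleftrightarrow> P = PX \<or> P = PY"
definition has_Z :: "pauli \<Rightarrow> bool" where "has_Z P \<longleftrightarrow> P = PZ \<or> P = PY"
definition phase :: "pauli \<Rightarrow> complex" where "phase P = (if P = PY then \<i> else 1)"

definition logical_X_supp :: "nat \<Rightarrow> pauli \<Rightarrow> pauli \<Rightarrow> nat set" where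
  "logical_X_supp L P1 P2 = (if has_X P1 then suppX1 L else {}) \<union> (if has_X P2 then suppX2 L else {})"
definition logical_Z_supp :: "nat \<Rightarrow> pauli \<Rightarrow> pauli \<Rightarrow> nat set" where
  "logical_Z_supp L P1 P2 = (if has_Z P1 then suppZ1 L else {}) \<union> (if has_Z P2 then suppZ2 L else {})"

lemma logical1_pauli_string: "L \<ge> 1 \<Longrightarrow> logical1 L P = phase P \<cdot>\<^sub>m pauli_string (nq L) (if has_X P then suppX1 L else {}) (if has_Z P then suppZ1 L else {})"
  by (cases P) (simp_all add: logical1_def phase_def has_X_def has_Z_def smult_one_mat pauli_string_empty pauli_string_X pauli_string_Z
      logX1_eq logZ1_eq pauli_string_def pauli_X_empty pauli_Z_empty)

lemma logical2_pauli_string: "L \<ge> 1 \<Longrightarrow> logical2 L P = phase P \<cdot>\<^sub>m pauli_string (nq L) (if has_X P then suppX2 L else {}) (if has_Z P then suppZ2 L else {})"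
  by (cases P) (simp_all add: logical2_def phase_def has_X_def has_Z_def smult_one_mat pauli_string_empty pauli_string_X pauli_string_Z
      logX2_eq logZ2_eq pauli_string_def pauli_X_empty pauli_Z_empty)

lemma supp_disjoint:
  assumes L: "L \<ge> 1"
  shows "suppX1 L \<inter> suppX2 L = {}" "suppZ1 L \<inter> suppZ2 L = {}" "suppX2 L \<inter> suppZ1 L = {}"
proof -
  show "suppX1 L \<inter> suppX2 L = {}" using suppX1_iff[OF L] suppX2_iff[OF L] hq_neq_uq[OF L] by auto
  show "suppZ1 L \<inter> suppZ2 L = {}" using suppZ1_iff[OF L] suppZ2_iff[OF L] hq_neq_uq[OF L] by auto
  show "suppX2 L \<inter> suppZ1 L = {}" using suppZ1_iff[OF L] suppX2_iff[OF L] hq_neq_uq[OF L] by (auto simp: eq_commute[of "uq L _ _"])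
qed

lemma logical_pauli_string:
  assumes L: "L \<ge> 1"
  shows "logical L P1 P2 = (phase P1 * phase P2) \<cdot>\<^sub>m pauli_string (nq L) (logical_X_supp L P1 P2) (logical_Z_supp L P1 P2)"
proof -
  let ?S1 = "if has_X P1 then suppX1 L else {}" and ?T1 = "if has_Z P1 then suppZ1 L else {}"
  let ?S2 = "if has_X P2 then suppX2 L else {}" and ?T2 = "if has_Z P2 then suppZ2 L else {}"
  have T1: "?T1 \<subseteq> {..<nq L}" "finite ?T1" using supp_less[OF L] supp_finite[OF L] by auto
  have T2: "finite ?T2" using supp_finite[OF L] by auto
  have sg1: "comm_sign ?S2 ?T1 = 1" using supp_disjoint[OF L] unfolding comm_sign_def by auto
  have d1: "sym_diff ?S1 ?S2 = logical_X_supp L P1 P2" unfolding logical_X_supp_def using supp_disjoint[OF L] by (intro sym_diff_disjoint) auto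
  have d2: "sym_diff ?T1 ?T2 = logical_Z_supp L P1 P2" unfolding logical_Z_supp_def using supp_disjoint[OF L] by (intro sym_diff_disjoint) auto
  have "logical L P1 P2 = (phase P1 \<cdot>\<^sub>m pauli_string (nq L) ?S1 ?T1) * (phase P2 \<cdot>\<^sub>m pauli_string (nq L) ?S2 ?T2)"
    unfolding logical_def logical1_pauli_string[OF L] logical2_pauli_string[OF L] ..
  also have "\<dots> = (phase P1 * phase P2) \<cdot>\<^sub>m (pauli_string (nq L) ?S1 ?T1 * pauli_string (nq L) ?S2 ?T2)"
    by (simp add: smult_mult_square[where N="2^nq L"] mult_smult_square[where N="2^nq L"] smult_smult_mat mult_carrier_square[where N="2^nq L"]
        mult.commute)
  also have "pauli_string (nq L) ?S1 ?T1 * pauli_string (nq L) ?S2 ?T2 = pauli_string (nq L) (logical_X_supp L P1 P2) (logical_Z_supp L P1 P2)"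
    using pauli_string_mult[OF T1 T2, of ?S1 ?S2] sg1 d1 d2 by (simp add: smult_one_mat)
  finally show ?thesis .
qed

lemma hq_in_logical_X_supp: "L \<ge> 1 \<Longrightarrow> hq L a b \<in> logical_X_supp L P1 P2 \<longleftrightarrow> has_X P1 \<and> int L dvd a"
  unfolding logical_X_supp_def using hq_in_suppX1 hq_notin_suppX2 by auto
lemma uq_in_logical_X_supp: "L \<ge> 1 \<Longrightarrow> uq L a b \<in> logical_X_supp L P1 P2 \<longleftrightarrow> has_X P2 \<and> int L dvd b"
  unfolding logical_X_supp_def using uq_notin_suppX1 uq_in_suppX2 by auto
lemma hq_in_logical_Z_supp: "L \<ge> 1 \<Longrightarrow> hq L a b \<in> logical_Z_supp L P1 P2 \<longleftrightarrow> has_Z P1 \<and> int L dvd (b - 1)"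
  unfolding logical_Z_supp_def using hq_in_suppZ1 hq_notin_suppZ2 by auto
lemma uq_in_logical_Z_supp: "L \<ge> 1 \<Longrightarrow> uq L a b \<in> logical_Z_supp L P1 P2 \<longleftrightarrow> has_Z P2 \<and> int L dvd (a - 1)"
  unfolding logical_Z_supp_def using uq_notin_suppZ1 uq_in_suppZ2 by auto

lemma logical_Z_supp_less: "L \<ge> 1 \<Longrightarrow> logical_Z_supp L P1 P2 \<subseteq> {..<nq L}"
  unfolding logical_Z_supp_def using supp_less by auto

definition corr_X_supp :: "nat \<Rightarrow> int \<Rightarrow> int \<Rightarrow> nat set" where
  "corr_X_supp L x y = (if int L dvd x \<and> int L dvd y then {} else if int L dvd y then {uq L (x + 1) 0} else {hq L x (y + 1)})"
definition corr_Z_supp :: "nat \<Rightarrow> int \<Rightarrow> int \<Rightarrow> nat set" where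
  "corr_Z_supp L x y = (if int L dvd (x - 1) \<and> int L dvd (y - 1) then {} else if int L dvd (y - 1) then {hq L (x - 1) 1} else {uq L x (y - 1)})"

lemma stab_Plaq_pauli_string: assumes L: "L \<ge> 1"
  shows "stab L (Plaq x y) = pauli_string (nq L) {} (odd_occ [hq L x y, hq L x (y + 1), uq L x y, uq L (x + 1) y])"
  unfolding stab_def pauli_string_Z using hq_less[OF L] uq_less[OF L] by (simp add: prod_on_sigZ)

lemma stab_Vert_pauli_string: assumes L: "L \<ge> 1"
  shows "stab L (Vert x y) = pauli_string (nq L) (odd_occ [hq L x y, hq L (x - 1) y, uq L x y, uq L x (y - 1)]) {}"
  unfolding stab_def pauli_string_X using hq_less[OF L] uq_less[OF L] by (simp add: prod_on_sigX)

lemma corr_Plaq_pauli_string: assumes L: "L \<ge> 1"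
  shows "corr L (Plaq x y) = pauli_string (nq L) (corr_X_supp L x y) {}"
  unfolding corr_def corr_X_supp_def pauli_string_X using hq_less[OF L] uq_less[OF L]
  by (simp add: embed1_sigX cmod_zero[OF L] pauli_X_empty)

lemma corr_Vert_pauli_string: assumes L: "L \<ge> 1"
  shows "corr L (Vert x y) = pauli_string (nq L) {} (corr_Z_supp L x y)"
  unfolding corr_def corr_Z_supp_def pauli_string_Z using hq_less[OF L] uq_less[OF L]
  by (simp add: embed1_sigZ cmod_eq[OF L] pauli_Z_empty)

lemma corr_Z_supp_less: "L \<ge> 1 \<Longrightarrow> corr_Z_supp L x y \<subseteq> {..<nq L}"
  unfolding corr_Z_supp_def using hq_less uq_less by auto

lemma sum_lessThan_4: "(\<Sum>i<(4::nat). f i) = f 0 + f 1 + f 2 + (f 3 :: complex)"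
proof -
  have e: "{..<4::nat} = {0,1,2,3}" by auto
  show ?thesis unfolding e by (simp add: algebra_simps)
qed

lemma quadratic_form_4:
  fixes \<Psi> :: "complex vec"
  assumes "\<Psi> \<in> carrier_vec 4" "K \<in> carrier_mat 4 4"
  shows "conjugate \<Psi> \<bullet> (K *\<^sub>v \<Psi>) = (\<Sum>i<4. cnj (\<Psi> $ i) * (\<Sum>l<4. K $$ (i,l) * \<Psi> $ l))"
  using assms by (simp add: scalar_prod_def lessThan_atLeast0)

lemma kron2_index: "i < 4 \<Longrightarrow> l < 4 \<Longrightarrow> kron2 A B $$ (i,l) = A $$ (i div 2, l div 2) * B $$ (i mod 2, l mod 2)"
  unfolding kron2_def by simp

lemma kron2_carrier: "kron2 A B \<in> carrier_mat 4 4"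
  unfolding kron2_def by simp

section \<open>Conservation of the logical observable\<close>

locale logical_observable =
  fixes L :: nat and P1 P2 :: pauli
  assumes L: "L \<ge> 1"
begin

abbreviation "n \<equiv> nq L"
abbreviation "S \<equiv> logical_X_supp L P1 P2"
abbreviation "T \<equiv> logical_Z_supp L P1 P2"
abbreviation "Obs \<equiv> logical L P1 P2"

lemma Obs_eq: "Obs = (phase P1 * phase P2) \<cdot>\<^sub>m pauli_string n S T"
  by (rule logical_pauli_string[OF L])

lemma Obs_carrier: "Obs \<in> carrier_mat (2^n) (2^n)"
  unfolding Obs_eq by simp

lemma Z_supp_less: "T \<subseteq> {..<n}" using logical_Z_supp_less[OF L] .

lemma stab_carrier: "stab L s \<in> carrier_mat (2^n) (2^n)"
  by (cases s) (simp_all add: stab_Plaq_pauli_string[OF L] stab_Vert_pauli_string[OF L])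

lemma corr_carrier: "corr L s \<in> carrier_mat (2^n) (2^n)"
  by (cases s) (simp_all add: corr_Plaq_pauli_string[OF L] corr_Vert_pauli_string[OF L])

lemma Obs_commute_pauli_string: "T' \<subseteq> {..<n} \<Longrightarrow> comm_sign S' T = comm_sign S T' \<Longrightarrow> Obs * pauli_string n S' T' = pauli_string n S' T' * Obs"
  unfolding Obs_eq by (rule smult_commute[where N="2^n"]) (simp_all add: pauli_string_commute Z_supp_less)

text \<open>A plaquette meets each logical X-line in zero or two edges, and so does a star each
  logical Z-line.\<close>

lemma Obs_stab_commute: "Obs * stab L s = stab L s * Obs"
proof (cases s)
  case (Plaq x y)
  let ?zs = "[hq L x y, hq L x (y + 1), uq L x y, uq L (x + 1) y]"
  have lt: "odd_occ ?zs \<subseteq> {..<n}" by (rule odd_occ_less) (use hq_less[OF L] uq_less[OF L] in auto)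
  have "comm_sign S (odd_occ ?zs) = 1" unfolding comm_sign_odd_occ
    by (simp add: hq_in_logical_X_supp[OF L] uq_in_logical_X_supp[OF L])
  then show ?thesis unfolding Plaq stab_Plaq_pauli_string[OF L] by (intro Obs_commute_pauli_string[OF lt]) simp
next
  case (Vert x y)
  let ?xs = "[hq L x y, hq L (x - 1) y, uq L x y, uq L x (y - 1)]"
  have "comm_sign (odd_occ ?xs) T = 1" unfolding comm_sign_commute[of _ T] comm_sign_odd_occ
    by (simp add: hq_in_logical_Z_supp[OF L] uq_in_logical_Z_supp[OF L])
  then show ?thesis unfolding Vert stab_Vert_pauli_string[OF L] by (intro Obs_commute_pauli_string) simp_all
qed

text \<open>An X-correction lies on a logical Z-line only for the plaquette \<open>p\<^sub>*\<close>, a Z-correction on a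
  logical X-line only for the vertex \<open>v\<^sub>*\<close>; both get the identity instead.\<close>

lemma Obs_corr_commute: "Obs * corr L s = corr L s * Obs"
proof (cases s)
  case (Plaq x y)
  have "comm_sign (corr_X_supp L x y) T = 1" unfolding corr_X_supp_def
    by (simp add: comm_sign_singleton hq_in_logical_Z_supp[OF L] uq_in_logical_Z_supp[OF L])
  then show ?thesis unfolding Plaq corr_Plaq_pauli_string[OF L] by (intro Obs_commute_pauli_string) simp_all
next
  case (Vert x y)
  have "comm_sign S (corr_Z_supp L x y) = 1" unfolding corr_Z_supp_def comm_sign_commute[of S]
    by (simp add: comm_sign_singleton hq_in_logical_X_supp[OF L] uq_in_logical_X_supp[OF L])
  then show ?thesis unfolding Vert corr_Vert_pauli_string[OF L] using corr_Z_supp_less[OF L] by (intro Obs_commute_pauli_string) simp_all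
qed

lemma stab_square: "stab L s * stab L s = 1\<^sub>m (2^n)"
proof (cases s)
  case (Plaq x y)
  have lt: "odd_occ [hq L x y, hq L x (y + 1), uq L x y, uq L (x + 1) y] \<subseteq> {..<n}"
    by (rule odd_occ_less) (use hq_less[OF L] uq_less[OF L] in auto)
  show ?thesis unfolding Plaq stab_Plaq_pauli_string[OF L] by (rule pauli_string_square[OF lt]) simp
next
  case (Vert x y)
  show ?thesis unfolding Vert stab_Vert_pauli_string[OF L] by (rule pauli_string_square) simp_all
qed

lemma corr_square: "corr L s * corr L s = 1\<^sub>m (2^n)"
proof (cases s)
  case (Plaq x y)
  show ?thesis unfolding Plaq corr_Plaq_pauli_string[OF L] by (rule pauli_string_square) simp_all
next
  case (Vert x y)
  show ?thesis unfolding Vert corr_Vert_pauli_string[OF L] by (rule pauli_string_square[OF corr_Z_supp_less[OF L]]) simp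
qed

lemma mat_adjoint_corr: "mat_adjoint (corr L s) = corr L s"
  by (cases s) (simp_all add: corr_Plaq_pauli_string[OF L] corr_Vert_pauli_string[OF L] pauli_string_X pauli_string_Z mat_adjoint_pauli_X mat_adjoint_pauli_Z)

lemma chanT_carrier: "\<rho> \<in> carrier_mat (2^n) (2^n) \<Longrightarrow> chanT L s \<rho> \<in> carrier_mat (2^n) (2^n)"
  unfolding chanT_def projP_def projM_def
  using stab_carrier[of s] corr_carrier[of s] mat_adjoint_carrier[OF corr_carrier[of s]]
  by (simp add: mult_carrier_square[where N="2^n"] minus_carrier_mat)

lemma mtrace_Obs_chanT: "\<rho> \<in> carrier_mat (2^n) (2^n) \<Longrightarrow> mtrace (Obs * chanT L s \<rho>) = mtrace (Obs * \<rho>)"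
  unfolding chanT_def projP_def projM_def
  by (rule mtrace_pinching_channel[OF Obs_carrier stab_carrier corr_carrier _ Obs_stab_commute Obs_corr_commute stab_square corr_square mat_adjoint_corr])

lemma liouv_carrier: "liouv L \<rho> \<in> carrier_mat (2^n) (2^n)"
  unfolding liouv_def by simp

lemma mtrace_Obs_liouv: "\<rho> \<in> carrier_mat (2^n) (2^n) \<Longrightarrow> mtrace (Obs * liouv L \<rho>) = 0"
proof -
  assume R: "\<rho> \<in> carrier_mat (2^n) (2^n)"
  have c: "chanT L s \<rho> - \<rho> \<in> carrier_mat (2^n) (2^n)" for s
    using chanT_carrier[OF R] R by (simp add: minus_carrier_mat)
  have "mtrace (Obs * liouv L \<rho>) = (\<Sum>s\<in>sites L. mtrace (Obs * (chanT L s \<rho> - \<rho>)))"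
    unfolding liouv_def by (rule mtrace_mult_sum_mat[OF Obs_carrier c])
  also have "\<dots> = 0"
    using mtrace_Obs_chanT[OF R] by (simp add: mtrace_mult_minus[OF Obs_carrier chanT_carrier[OF R] R])
  finally show ?thesis .
qed

definition chan_bound :: "site \<Rightarrow> real" where
  "chan_bound s = entry_norm (2^n) (projP L s) * entry_norm (2^n) (projP L s)
   + entry_norm (2^n) (corr L s) * entry_norm (2^n) (projM L s) * entry_norm (2^n) (projM L s) * entry_norm (2^n) (mat_adjoint (corr L s)) + 1"

lemma chan_bound_nonneg: "chan_bound s \<ge> 0"
  unfolding chan_bound_def using entry_norm_nonneg by (simp add: add_nonneg_nonneg)

lemma proj_carrier: "projP L s \<in> carrier_mat (2^n) (2^n)" "projM L s \<in> carrier_mat (2^n) (2^n)"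
  unfolding projP_def projM_def using stab_carrier[of s] by (auto simp: minus_carrier_mat)

lemma entry_norm_liouv: "X \<in> carrier_mat (2^n) (2^n) \<Longrightarrow> entry_norm (2^n) (liouv L X) \<le> (\<Sum>s\<in>sites L. chan_bound s) * entry_norm (2^n) X"
proof -
  assume X: "X \<in> carrier_mat (2^n) (2^n)"
  have "entry_norm (2^n) (liouv L X) \<le> (\<Sum>s\<in>sites L. entry_norm (2^n) (chanT L s X - X))"
    unfolding liouv_def by (rule entry_norm_sum_mat[OF sites_finite])
  also have "\<dots> \<le> (\<Sum>s\<in>sites L. chan_bound s * entry_norm (2^n) X)"
  proof (rule sum_mono)
    fix s
    show "entry_norm (2^n) (chanT L s X - X) \<le> chan_bound s * entry_norm (2^n) X"
      unfolding chanT_def chan_bound_def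
      by (rule entry_norm_channel_minus[OF proj_carrier(1) proj_carrier(2) corr_carrier mat_adjoint_carrier[OF corr_carrier] X])
  qed
  also have "\<dots> = (\<Sum>s\<in>sites L. chan_bound s) * entry_norm (2^n) X" by (simp add: sum_distrib_right)
  finally show ?thesis .
qed

lemma mtrace_Obs_exp_liouv: "\<rho> \<in> carrier_mat (2^n) (2^n) \<Longrightarrow> mtrace (Obs * exp_liouv L t \<rho>) = mtrace (Obs * \<rho>)"
  unfolding exp_liouv_def
  by (rule mtrace_exp_series_conserved[OF Obs_carrier _ liouv_carrier entry_norm_liouv _ mtrace_Obs_liouv])
     (simp_all add: sum_nonneg chan_bound_nonneg)

abbreviation "a \<equiv> qA1 L"
abbreviation "b \<equiv> qA2 L"
abbreviation "BB \<equiv> qB L \<union> qB' L"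
abbreviation "CC \<equiv> qC L \<union> qC' L"
abbreviation "D \<equiv> qD L"

lemma qA_less: "a < n" "b < n"
  unfolding qA1_def qA2_def using hq_less[OF L] uq_less[OF L] by auto

lemma qA1_neq_qA2: "a \<noteq> b"
  unfolding qA1_def qA2_def using hq_neq_uq[OF L] by auto

lemma a_in_X_supp: "a \<in> S \<longleftrightarrow> has_X P1" unfolding qA1_def using hq_in_logical_X_supp[OF L] by simp
lemma b_in_X_supp: "b \<in> S \<longleftrightarrow> has_X P2" unfolding qA2_def using uq_in_logical_X_supp[OF L] by simp
lemma a_in_Z_supp: "a \<in> T \<longleftrightarrow> has_Z P1" unfolding qA1_def using hq_in_logical_Z_supp[OF L] by simp
lemma b_in_Z_supp: "b \<in> T \<longleftrightarrow> has_Z P2" unfolding qA2_def using uq_in_logical_Z_supp[OF L] by simp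

lemma BB_less: "BB \<subseteq> {..<n}"
  using supp_less[OF L] unfolding suppX1_def suppX2_def by auto
lemma CC_less: "CC \<subseteq> {..<n}"
  using supp_less[OF L] unfolding suppZ1_def suppZ2_def by auto
lemma D_less: "D \<subseteq> {..<n}"
  unfolding qD_def by auto

lemma finite_BB_CC_D: "finite BB" "finite CC" "finite D"
  using BB_less CC_less D_less finite_subset by blast+

lemma X_supp_subset: "S \<subseteq> insert a (insert b BB)"
  unfolding logical_X_supp_def suppX1_def suppX2_def by auto

lemma Z_supp_subset: "T \<subseteq> insert a (insert b CC)"
  unfolding logical_Z_supp_def suppZ1_def suppZ2_def by auto

lemma CC_notin_X_supp: "q \<in> CC \<Longrightarrow> q \<notin> S"
proof -
  assume "q \<in> CC"
  then show "q \<notin> S"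
  proof
    assume "q \<in> qC L"
    then obtain x where "q = hq L x 1" "cmod L x \<noteq> 0" unfolding qC_def by auto
    then show ?thesis using hq_in_logical_X_supp[OF L] cmod_zero[OF L] by auto
  next
    assume "q \<in> qC' L"
    then obtain y where "q = uq L 1 y" "cmod L y \<noteq> 0" unfolding qC'_def by auto
    then show ?thesis using uq_in_logical_X_supp[OF L] cmod_zero[OF L] by auto
  qed
qed

lemma D_notin_X_supp: "q \<in> D \<Longrightarrow> q \<notin> S"
  using X_supp_subset unfolding qD_def by auto

lemma qA1_notin_BB_CC: "a \<notin> BB" "a \<notin> CC"
  using qA1_notin_qB[OF L] qA1_notin_qC[OF L] hq_neq_uq[OF L]
  unfolding qA1_def qB'_def qC'_def by auto

lemma qA2_notin_BB_CC: "b \<notin> BB" "b \<notin> CC"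
  using qA2_notin_qB'[OF L] qA2_notin_qC'[OF L] hq_neq_uq[OF L]
  unfolding qA2_def qB_def qC_def by (auto simp: eq_commute[of "uq L _ _"])

lemma BB_CC_disjoint: "BB \<inter> CC = {}"
proof -
  have "qB L \<inter> qC L = {}"
    unfolding qB_def qC_def using hq_eq_iff[OF L] by (auto simp: cmod_def)
  moreover have "qB' L \<inter> qC' L = {}"
    unfolding qB'_def qC'_def using uq_eq_iff[OF L] by (auto simp: cmod_def)
  moreover have "qB L \<inter> qC' L = {}" "qB' L \<inter> qC L = {}"
    unfolding qB_def qC'_def qB'_def qC_def using hq_neq_uq[OF L] by (auto simp: eq_commute[of "uq L _ _"])
  ultimately show ?thesis by blast
qed

lemma rest_qubits_eq: "{..<n} - {a, b} = BB \<union> (CC \<union> D)"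
  using BB_less CC_less qA1_notin_BB_CC qA2_notin_BB_CC unfolding qD_def by auto

lemma rest_qubits_disjoint: "BB \<inter> (CC \<union> D) = {}" "CC \<inter> D = {}"
  using BB_CC_disjoint unfolding qD_def by auto

text \<open>The logical observable flips the bits of \<open>A\<^sub>1\<close>, \<open>A\<^sub>2\<close> where it has an X and signs them where
  it has a Z; \<open>amp_A\<close> is the resulting contribution of the register \<open>\<A>\<close> to a diagonal term, and
  \<open>weight_rest\<close> that of the other qubits.\<close>

definition flip_A1 :: "nat \<Rightarrow> nat" where
  "flip_A1 u = (if has_X P1 then 1 - u else (u::nat))"
definition flip_A2 :: "nat \<Rightarrow> nat" where
  "flip_A2 v = (if has_X P2 then 1 - v else (v::nat))"
definition sign_A :: "nat \<Rightarrow> nat \<Rightarrow> complex" where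
  "sign_A u v = (if has_Z P1 \<and> u = (1::nat) then -1 else (1::complex)) * (if has_Z P2 \<and> v = (1::nat) then -1 else 1)"
definition amp_A :: "complex vec \<Rightarrow> nat \<Rightarrow> nat \<Rightarrow> complex" where
  "amp_A \<Psi> u v = sign_A (flip_A1 u) (flip_A2 v) * (\<Psi> $ (2 * flip_A1 u + flip_A2 v) * cnj (\<Psi> $ (2 * u + v)))"
definition weight_rest :: "complex mat \<Rightarrow> (nat \<Rightarrow> nat) \<Rightarrow> complex" where
  "weight_rest \<rho>D h = (\<Prod>q\<in>BB. (1/2::complex)) * (\<Prod>q\<in>CC. if h q = 0 then 1 else 0)
    * \<rho>D $$ (index_of_bits (sorted_list_of_set D) h, index_of_bits (sorted_list_of_set D) h)"

lemma finite_Z_supp: "finite T" using Z_supp_less finite_subset by blast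

lemma dIndex_index_of_bits: "dIndex L i = index_of_bits (sorted_list_of_set D) (\<lambda>r. bit_of r i)"
  unfolding dIndex_def index_of_bits_def Let_def ..

definition ind_CC :: "nat \<Rightarrow> complex" where
  "ind_CC i = (\<Prod>q\<in>CC. if bit_of q i = 0 then 1 else 0)"

lemma bit_of_flip_bits_A:
  "bit_of a (flip_bits n S i) = flip_A1 (bit_of a i)" "bit_of b (flip_bits n S i) = flip_A2 (bit_of b i)"
  using bit_of_flip_bits[OF qA_less(1)] bit_of_flip_bits[OF qA_less(2)] a_in_X_supp b_in_X_supp
  unfolding flip_A1_def flip_A2_def by simp_all

lemma bit_of_flip_bits_CC_D: "q \<in> CC \<union> D \<Longrightarrow> bit_of q (flip_bits n S i) = bit_of q i"
  using bit_of_flip_bits[of q n S i] CC_less D_less CC_notin_X_supp D_notin_X_supp by auto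

lemma dIndex_flip_bits: "dIndex L (flip_bits n S i) = dIndex L i"
  unfolding dIndex_index_of_bits index_of_bits_def
proof (intro sum.cong refl)
  fix k assume "k \<in> {..<length (sorted_list_of_set D)}"
  then have "sorted_list_of_set D ! k \<in> D"
    using nth_mem[of k "sorted_list_of_set D"] finite_BB_CC_D(3) by simp
  then show "bit_of (sorted_list_of_set D ! k) (flip_bits n S i) * 2 ^ k = bit_of (sorted_list_of_set D ! k) i * 2 ^ k"
    using bit_of_flip_bits_CC_D by simp
qed

text \<open>Where the projector onto \<open>|0\<rangle>\<close> on \<open>CC'\<close> does not vanish, the Z-part of the observable
  only sees the qubits \<open>A\<^sub>1\<close> and \<open>A\<^sub>2\<close>.\<close>

lemma z_sign_flip_bits_ind_CC:
  "z_sign T (flip_bits n S i) * ind_CC i = sign_A (flip_A1 (bit_of a i)) (flip_A2 (bit_of b i)) * ind_CC i"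
proof (cases "\<forall>q\<in>CC. bit_of q i = 0")
  case True
  let ?f = "\<lambda>r. if bit_of r (flip_bits n S i) = 1 then -1 else (1::complex)"
  have "prod ?f (T - {a,b}) = 1"
  proof (rule prod.neutral, rule ballI)
    fix r assume "r \<in> T - {a,b}"
    then have "r \<in> CC" using Z_supp_subset by auto
    then show "?f r = 1" using True bit_of_flip_bits_CC_D by auto
  qed
  then have "z_sign T (flip_bits n S i) = (if a \<in> T then ?f a else 1) * (if b \<in> T then ?f b else 1)"
    unfolding z_sign_def using prod_split_pair[OF qA1_neq_qA2 finite_Z_supp, of ?f] by simp
  then show ?thesis unfolding sign_A_def using a_in_Z_supp b_in_Z_supp bit_of_flip_bits_A by simp
next
  case False
  then have "ind_CC i = 0" unfolding ind_CC_def using finite_BB_CC_D(2) by (auto simp: prod_zero_iff)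
  then show ?thesis by simp
qed

lemma diag_term_rho0:
  assumes i: "i < 2^n"
  shows "z_sign T (flip_bits n S i) * rho0 L \<Psi> \<rho>D $$ (flip_bits n S i, i)
    = amp_A \<Psi> (bit_of a i) (bit_of b i) * weight_rest \<rho>D (\<lambda>r. bit_of r i)"
proof -
  let ?j = "flip_bits n S i"
  have "(\<Prod>q\<in>CC. if bit_of q ?j = 0 \<and> bit_of q i = 0 then 1 else (0::complex)) = ind_CC i"
    unfolding ind_CC_def by (intro prod.cong refl) (simp add: bit_of_flip_bits_CC_D)
  then have "rho0 L \<Psi> \<rho>D $$ (?j, i) = \<Psi> $ (2 * bit_of a ?j + bit_of b ?j) * cnj (\<Psi> $ (2 * bit_of a i + bit_of b i))
      * (\<Prod>q\<in>BB. (1/2::complex)) * ind_CC i * \<rho>D $$ (dIndex L i, dIndex L i)"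
    unfolding rho0_def using i flip_bits_less[of n S i] dIndex_flip_bits by simp
  then have "z_sign T ?j * rho0 L \<Psi> \<rho>D $$ (?j, i) = (z_sign T ?j * ind_CC i) * (\<Psi> $ (2 * bit_of a ?j + bit_of b ?j)
      * cnj (\<Psi> $ (2 * bit_of a i + bit_of b i)) * (\<Prod>q\<in>BB. (1/2::complex)) * \<rho>D $$ (dIndex L i, dIndex L i))"
    by (simp add: ac_simps)
  also have "\<dots> = amp_A \<Psi> (bit_of a i) (bit_of b i) * weight_rest \<rho>D (\<lambda>r. bit_of r i)"
    unfolding z_sign_flip_bits_ind_CC
    by (simp add: amp_A_def weight_rest_def bit_of_flip_bits_A ind_CC_def dIndex_index_of_bits ac_simps)
  finally show ?thesis .
qed

lemma mtrace_Obs_rho0_phase: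
  assumes R: "rho0 L \<Psi> \<rho>D \<in> carrier_mat (2^n) (2^n)"
  shows "mtrace (Obs * rho0 L \<Psi> \<rho>D) = (phase P1 * phase P2) * mtrace (pauli_string n S T * rho0 L \<Psi> \<rho>D)"
proof -
  have "Obs * rho0 L \<Psi> \<rho>D = (phase P1 * phase P2) \<cdot>\<^sub>m (pauli_string n S T * rho0 L \<Psi> \<rho>D)"
    unfolding Obs_eq by (rule smult_mult_square[OF pauli_string_carrier R])
  then show ?thesis using mtrace_smult[OF mult_carrier_square[OF pauli_string_carrier R]] by simp
qed

lemma mtrace_pauli_string_rho0:
  assumes R: "rho0 L \<Psi> \<rho>D \<in> carrier_mat (2^n) (2^n)"
  shows "mtrace (pauli_string n S T * rho0 L \<Psi> \<rho>D) = (\<Sum>i<2^n. amp_A \<Psi> (bit_of a i) (bit_of b i) * weight_rest \<rho>D (\<lambda>r. bit_of r i))"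
  unfolding mtrace_pauli_string_mult[OF R]
proof (rule sum.cong[OF refl])
  fix i assume "i \<in> {..<(2::nat)^n}"
  then show "z_sign T (flip_bits n S i) * rho0 L \<Psi> \<rho>D $$ (flip_bits n S i, i) = amp_A \<Psi> (bit_of a i) (bit_of b i) * weight_rest \<rho>D (\<lambda>r. bit_of r i)"
    by (intro diag_term_rho0) simp
qed

lemma sum_diag_factor_A_rest:
  "(\<Sum>i<2^n. amp_A \<Psi> (bit_of a i) (bit_of b i) * weight_rest \<rho>D (\<lambda>r. bit_of r i))
   = (\<Sum>u\<in>bit_vals. \<Sum>v\<in>bit_vals. amp_A \<Psi> u v) * (\<Sum>h\<in>PiE ({..<n} - {a,b}) (\<lambda>_. bit_vals). weight_rest \<rho>D h)"
proof (rule sum_bits_split_pair[OF qA_less qA1_neq_qA2])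
  define ds where "ds = sorted_list_of_set D"
  fix v w :: "nat \<Rightarrow> nat" assume agree: "\<And>q. q \<in> {..<n} - {a,b} \<Longrightarrow> v q = w q"
  have agree': "\<And>q. q \<in> BB \<union> (CC \<union> D) \<Longrightarrow> v q = w q" using agree unfolding rest_qubits_eq .
  have "(\<Prod>q\<in>CC. if v q = 0 then 1 else (0::complex)) = (\<Prod>q\<in>CC. if w q = 0 then 1 else 0)"
  proof (rule prod.cong[OF refl])
    fix q assume "q \<in> CC" then show "(if v q = 0 then 1 else (0::complex)) = (if w q = 0 then 1 else 0)"
      using agree'[of q] by simp
  qed
  moreover have "index_of_bits ds v = index_of_bits ds w"
    unfolding index_of_bits_def
  proof (rule sum.cong[OF refl])
    fix k assume "k \<in> {..<length ds}"
    then have "ds ! k \<in> D" using nth_mem[of k ds] finite_BB_CC_D(3) unfolding ds_def by simp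
    then show "v (ds ! k) * 2 ^ k = w (ds ! k) * 2 ^ k" using agree'[of "ds ! k"] by simp
  qed
  ultimately show "weight_rest \<rho>D v = weight_rest \<rho>D w" unfolding weight_rest_def ds_def by simp
qed

lemma sum_rest_weight_eq_1:
  assumes dens: "is_density (2 ^ card D) \<rho>D"
  shows "(\<Sum>h\<in>PiE ({..<n} - {a,b}) (\<lambda>_. bit_vals). weight_rest \<rho>D h) = 1"
proof -
  have dr: "dim_row \<rho>D = 2 ^ card D" and tr: "mtrace \<rho>D = 1" using dens unfolding is_density_def by auto
  show ?thesis unfolding rest_qubits_eq weight_rest_def by (rule sum_PiE_rest_weight[OF finite_BB_CC_D rest_qubits_disjoint refl dr tr])
qed

lemma mtrace_Obs_rho0:
  assumes dens: "is_density (2 ^ card D) \<rho>D"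
  shows "mtrace (Obs * rho0 L \<Psi> \<rho>D) = (phase P1 * phase P2) * (\<Sum>u\<in>bit_vals. \<Sum>v\<in>bit_vals. amp_A \<Psi> u v)"
proof -
  have R: "rho0 L \<Psi> \<rho>D \<in> carrier_mat (2^n) (2^n)" unfolding rho0_def by simp
  show ?thesis unfolding mtrace_Obs_rho0_phase[OF R] mtrace_pauli_string_rho0[OF R] sum_diag_factor_A_rest sum_rest_weight_eq_1[OF dens] by simp
qed

lemma phase_sum_quadratic_form:
  fixes \<Psi> :: "complex vec"
  assumes Psi: "\<Psi> \<in> carrier_vec 4"
  shows "(phase P1 * phase P2) * (\<Sum>u\<in>bit_vals. \<Sum>v\<in>bit_vals. amp_A \<Psi> u v) = conjugate \<Psi> \<bullet> (kron2 (pmat P1) (pmat P2) *\<^sub>v \<Psi>)"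
  unfolding quadratic_form_4[OF Psi kron2_carrier] sum_lessThan_4 amp_A_def sign_A_def flip_A1_def flip_A2_def
  by (cases P1; cases P2)
     (simp_all add: kron2_index pmat_def sigX_def sigY_def sigZ_def has_X_def has_Z_def phase_def
        bit_vals_def algebra_simps,
      simp_all add: numeral_2_eq_2 numeral_3_eq_3 algebra_simps)

end

theorem lemma1:
  fixes L :: nat and \<Psi> :: "complex vec" and \<rho>D :: "complex mat"
    and P1 P2 :: pauli and t :: real
  assumes "L \<ge> 1"
    and "\<Psi> \<in> carrier_vec 4"
    and "is_density (2 ^ card (qD L)) \<rho>D"
    and "t \<ge> 0"
  shows "mtrace (logical L P1 P2 * exp_liouv L t (rho0 L \<Psi> \<rho>D))
           = conjugate \<Psi> \<bullet> (kron2 (pmat P1) (pmat P2) *\<^sub>v \<Psi>)"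
proof -
  interpret logical_observable L P1 P2 by unfold_locales (rule assms(1))
  have R: "rho0 L \<Psi> \<rho>D \<in> carrier_mat (2^nq L) (2^nq L)" unfolding rho0_def by simp
  have "mtrace (logical L P1 P2 * exp_liouv L t (rho0 L \<Psi> \<rho>D)) = mtrace (Obs * rho0 L \<Psi> \<rho>D)"
    by (rule mtrace_Obs_exp_liouv[OF R])
  also have "\<dots> = (phase P1 * phase P2) * (\<Sum>u\<in>bit_vals. \<Sum>v\<in>bit_vals. amp_A \<Psi> u v)"
    by (rule mtrace_Obs_rho0[OF assms(3)])
  also have "\<dots> = conjugate \<Psi> \<bullet> (kron2 (pmat P1) (pmat P2) *\<^sub>v \<Psi>)"
    by (rule phase_sum_quadratic_form[OF assms(2)])
  finally show ?thesis .
qed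

end
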